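(* Let $\{w_k\}$ be generated by the subsampled Newton iteration $w_{k+1}=w_k-\nabla^2F_{S_k}(w_k)^{-1}\nabla F_{X_k}(w_k)$ with unit steplength. Suppose Assumptions A1–A4 and B1 hold and that for all $k$: (i) $|X_k|\ge|X_0|\,\eta_k^{\,k}$, where $|X_0|\ge\left(\frac{6v\gamma M}{\bar\mu^2}\right)^2$, $\eta_k>\eta_{k-1}$, $\eta_k\to\infty$, and $\eta_1>1$; (ii) $|S_k|>|S_{k-1}|$, $\lim_{k\to\infty}|S_k|=\infty$, and $|S_0|\ge\left(\frac{4\sigma}{\bar\mu}\right)^2$. If $\|w_0-w^*\|\le\frac{\bar\mu}{3\gamma M}$, then $\mathbb{E}[\|w_k-w^*\|]\to0$ R-superlinearly, i.e., there is a positive sequence $\{\tau_k\}$ with $\mathbb{E}[\|w_k-w^*\|]\le\tau_k$ for all $k$ and $\tau_{k+1}/\tau_k\to0$.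
   Context: Setting: $P$ is a probability distribution on input–output pairs $(x,y)$, $F(w)=\int f(w;x,y)\,dP(x,y)$ for $w\in\mathbb{R}^d$. Sample points $(x^i,y^i)$ are drawn independently from $P$, $F_i(w)=f(w;x^i,y^i)$ (so $\nabla F_i$, $\nabla^2F_i$ are unbiased for $\nabla F$, $\nabla^2F$). For a finite index set $S$, $\nabla F_S(w)=\frac1{|S|}\sum_{i\in S}\nabla F_i(w)$, $\nabla^2F_S(w)=\frac1{|S|}\sum_{i\in S}\nabla^2F_i(w)$. The samples $X_k,S_k$ are index sets of independently drawn points, chosen independently of each other and of the past. $w^*$ is the unique minimizer of $F$. Assumption A1: $F$ is twice continuously differentiable; for every positive integer $\beta$ there are $0<\mu_\beta\le L_\beta$ with $\mu_\beta I\preceq\nabla^2F_S(w)\preceq L_\beta I$ for all $w$ and all $|S|=\beta$; constants $0<\bar\mu\le\mu_\beta$ and $L_\beta\le\bar L<\infty$ for all $\beta$; and $\mu I\preceq\nabla^2F(w)\preceq LI$ for all $w$. Assumption A2: $\operatorname{tr}(\operatorname{Cov}(\nabla F_i(w)))\le v^2$ for all $w$. Assumption A3: $\|\nabla^2F(w)-\nabla^2F(z)\|\le M\|w-z\|$ for all $w,z$. Assumption A4: $\|\mathbb{E}[(\nabla^2F_i(w)-\nabla^2F(w))^2]\|\le\sigma^2$ for all $w$. Assumption B1: there is $\gamma>0$ such that every iterate satisfies $\mathbb{E}[\|w_k-w^*\|^2]\le\gamma(\mathbb{E}[\|w_k-w^*\|])^2$. *)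

theory Defs
  imports "HOL-Probability.Probability"
begin

definition loewner_le :: "real^'n^'n \<Rightarrow> real^'n^'n \<Rightarrow> bool" where
  "loewner_le A B \<longleftrightarrow> (\<forall>x. x \<bullet> (A *v x) \<le> x \<bullet> (B *v x))"

text \<open>Sample points: Z (False,k,i) is the i-th point of X_k, Z (True,k,i) the i-th point of S_k.\<close>
definition sample_grad ::
  "(real^'n \<Rightarrow> 'z \<Rightarrow> real^'n) \<Rightarrow> (bool \<times> nat \<times> nat \<Rightarrow> 'a \<Rightarrow> 'z) \<Rightarrow> (nat \<Rightarrow> nat)
    \<Rightarrow> nat \<Rightarrow> real^'n \<Rightarrow> 'a \<Rightarrow> real^'n" where
  "sample_grad grad Z nX k w \<omega> = (1 / real (nX k)) *\<^sub>R (\<Sum>i<nX k. grad w (Z (False, k, i) \<omega>))"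

definition sample_hess ::
  "(real^'n \<Rightarrow> 'z \<Rightarrow> real^'n^'n) \<Rightarrow> (bool \<times> nat \<times> nat \<Rightarrow> 'a \<Rightarrow> 'z) \<Rightarrow> (nat \<Rightarrow> nat)
    \<Rightarrow> nat \<Rightarrow> real^'n \<Rightarrow> 'a \<Rightarrow> real^'n^'n" where
  "sample_hess hess Z nS k w \<omega> = (1 / real (nS k)) *\<^sub>R (\<Sum>i<nS k. hess w (Z (True, k, i) \<omega>))"

primrec sn_iter ::
  "real^'n \<Rightarrow> (real^'n \<Rightarrow> 'z \<Rightarrow> real^'n) \<Rightarrow> (real^'n \<Rightarrow> 'z \<Rightarrow> real^'n^'n)
    \<Rightarrow> (bool \<times> nat \<times> nat \<Rightarrow> 'a \<Rightarrow> 'z) \<Rightarrow> (nat \<Rightarrow> nat) \<Rightarrow> (nat \<Rightarrow> nat) \<Rightarrow> nat \<Rightarrow> 'a \<Rightarrow> real^'n" where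
  "sn_iter w0 grad hess Z nX nS 0 = (\<lambda>\<omega>. w0)"
| "sn_iter w0 grad hess Z nX nS (Suc k) =
     (\<lambda>\<omega>. sn_iter w0 grad hess Z nX nS k \<omega>
        - matrix_inv (sample_hess hess Z nS k (sn_iter w0 grad hess Z nX nS k \<omega>) \<omega>)
            *v sample_grad grad Z nX k (sn_iter w0 grad hess Z nX nS k \<omega>) \<omega>)"

definition sample_index :: "(nat \<Rightarrow> nat) \<Rightarrow> (nat \<Rightarrow> nat) \<Rightarrow> (bool \<times> nat \<times> nat) set" where
  "sample_index nX nS = {(b, k, i). i < (if b then nS k else nX k)}"

end

theory Submission
  imports Defs
begin

text \<open>Write \<open>e\<^sub>k = \<parallel>w\<^sub>k - w*\<parallel>\<close>. Because every sampled Hessian is bounded below by \<open>\<mu>bar\<close>,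
  one Newton step gives \<open>e\<^sub>k\<^sub>+\<^sub>1 \<le> (\<parallel>(\<nabla>\<^sup>2F\<^sub>S - \<nabla>\<^sup>2F)(w\<^sub>k - w*)\<parallel> + \<parallel>\<nabla>\<^sup>2F(w\<^sub>k)(w\<^sub>k - w*) - \<nabla>F(w\<^sub>k)\<parallel>
  + \<parallel>\<nabla>F\<^sub>X - \<nabla>F\<parallel>) / \<mu>bar\<close>. The middle term is at most \<open>M e\<^sub>k\<^sup>2 / 2\<close> by the Lipschitz
  continuity of the Hessian. The outer terms are norms of sample means of independent mean-zero vectors,
  and the samples of step \<open>k\<close> are independent of \<open>w\<^sub>k\<close>, so their expectations are at most
  \<open>\<sigma> e\<^sub>k / \<surd>|S\<^sub>k|\<close> and \<open>v / \<surd>|X\<^sub>k|\<close>. With B1 the expected errors satisfy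
  \<open>E\<^sub>k\<^sub>+\<^sub>1 \<le> A E\<^sub>k\<^sup>2 + b\<^sub>k E\<^sub>k + c\<^sub>k\<close> with \<open>b\<^sub>k \<longrightarrow> 0\<close> and \<open>c\<^sub>k \<sim> \<eta>\<^sub>k\<^sup>-\<^sup>k\<^sup>/\<^sup>2\<close>, whose ratios tend to 0. The
  conditions on \<open>w\<^sub>0\<close>, \<open>|X\<^sub>0|\<close> and \<open>|S\<^sub>0|\<close> keep the solution \<open>\<tau>\<^sub>k\<close> of this recursion with equality
  bounded by \<open>\<tau>\<^sub>0\<close>, hence \<open>\<tau>\<^sub>k \<longrightarrow> 0\<close> and \<open>\<tau>\<^sub>k\<^sub>+\<^sub>1 / \<tau>\<^sub>k \<longrightarrow> 0\<close>.\<close>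

section \<open>Symmetry of the Hessian\<close>

lemma second_difference_remainder_le:
  fixes f :: "real^'n \<Rightarrow> real" and g :: "real^'n \<Rightarrow> real^'n" and H :: "real^'n^'n"
  assumes f_deriv: "\<And>w. (f has_derivative (\<lambda>h. g w \<bullet> h)) (at w)"
    and g_remainder: "\<And>y. norm y < d \<Longrightarrow> norm (g (x + y) - g x - H *v y) \<le> e * norm y"
    and t: "0 < t" "t * (norm h + norm k) < d" and "0 \<le> e"
  shows "\<bar>f (x + t *\<^sub>R h + t *\<^sub>R k) - f (x + t *\<^sub>R h) - f (x + t *\<^sub>R k) + f x - t\<^sup>2 * ((H *v k) \<bullet> h)\<bar>
    \<le> 2 * e * t\<^sup>2 * (norm h + norm k) * norm h"
proof -
  define r where "r y = g (x + y) - g x - H *v y" for y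
  \<comment> \<open>the second difference is the increment of \<psi> along the segment from 0 to t h\<close>
  define \<psi> where "\<psi> u = f (x + u + t *\<^sub>R k) - f (x + u) - (H *v (t *\<^sub>R k)) \<bullet> u" for u
  define S where "S = closed_segment 0 (t *\<^sub>R h)"
  have \<psi>_deriv: "(\<psi> has_derivative (\<lambda>v. (r (u + t *\<^sub>R k) - r u) \<bullet> v)) (at u within S)" for u
  proof -
    have "(\<psi> has_derivative (\<lambda>v. g (x + u + t *\<^sub>R k) \<bullet> v - g (x + u) \<bullet> v - (H *v (t *\<^sub>R k)) \<bullet> v)) (at u)"
      unfolding \<psi>_def
      by (intro has_derivative_diff has_derivative_compose[OF _ f_deriv, of "\<lambda>u. x + u + t *\<^sub>R k" _ u,
            simplified] has_derivative_compose[OF _ f_deriv, of "\<lambda>u. x + u" _ u, simplified])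
         (auto intro!: derivative_eq_intros)
    moreover have "r (u + t *\<^sub>R k) - r u = g (x + u + t *\<^sub>R k) - g (x + u) - H *v (t *\<^sub>R k)"
      by (simp add: r_def matrix_vector_right_distrib algebra_simps)
    ultimately show ?thesis
      by (auto simp: inner_diff_left intro: has_derivative_at_withinI)
  qed
  have \<psi>_deriv_bound: "onorm (\<lambda>v. (r (u + t *\<^sub>R k) - r u) \<bullet> v) \<le> 2 * e * t * (norm h + norm k)"
    if "u \<in> S" for u
  proof -
    obtain s where s: "0 \<le> s" "s \<le> 1" "u = s *\<^sub>R (t *\<^sub>R h)"
      using \<open>u \<in> S\<close> unfolding S_def closed_segment_def by auto
    have "norm u \<le> t * norm h"
      using s t by (simp add: mult_left_le_one_le)
    then have u: "norm u \<le> t * (norm h + norm k)" and uk: "norm (u + t *\<^sub>R k) \<le> t * (norm h + norm k)"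
      using norm_triangle_ineq[of u "t *\<^sub>R k"] t by (simp_all add: algebra_simps add_increasing2)
    have "norm (r (u + t *\<^sub>R k) - r u) \<le> e * norm (u + t *\<^sub>R k) + e * norm u"
      using g_remainder[of u] g_remainder[of "u + t *\<^sub>R k"] u uk t(2) norm_triangle_ineq4
      unfolding r_def by (smt (verit))
    also have "\<dots> \<le> 2 * e * t * (norm h + norm k)"
      using mult_left_mono[OF u \<open>0 \<le> e\<close>] mult_left_mono[OF uk \<open>0 \<le> e\<close>] by (simp add: algebra_simps)
    finally show ?thesis
      by (intro onorm_le) (metis Cauchy_Schwarz_ineq2 mult_right_mono norm_ge_zero order_trans real_norm_def)
  qed
  have "norm (\<psi> (t *\<^sub>R h) - \<psi> 0) \<le> 2 * e * t * (norm h + norm k) * norm (t *\<^sub>R h - 0)"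
    by (rule differentiable_bound[of S \<psi>, OF _ \<psi>_deriv \<psi>_deriv_bound]) (auto simp: S_def)
  moreover have "\<psi> (t *\<^sub>R h) - \<psi> 0
      = f (x + t *\<^sub>R h + t *\<^sub>R k) - f (x + t *\<^sub>R h) - f (x + t *\<^sub>R k) + f x - t\<^sup>2 * ((H *v k) \<bullet> h)"
    by (simp add: \<psi>_def power2_eq_square scaleR_matrix_vector_assoc[symmetric] matrix_vector_mult_scaleR)
  ultimately show ?thesis
    using t by (simp add: power2_eq_square algebra_simps)
qed

lemma second_difference_tendsto:
  fixes f :: "real^'n \<Rightarrow> real" and g :: "real^'n \<Rightarrow> real^'n" and H :: "real^'n \<Rightarrow> real^'n^'n"
  assumes f_deriv: "\<And>w. (f has_derivative (\<lambda>h. g w \<bullet> h)) (at w)"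
    and g_deriv: "\<And>w. (g has_derivative (\<lambda>h. H w *v h)) (at w)"
  shows "((\<lambda>t. (f (x + t *\<^sub>R h + t *\<^sub>R k) - f (x + t *\<^sub>R h) - f (x + t *\<^sub>R k) + f x) / t\<^sup>2)
           \<longlongrightarrow> (H x *v k) \<bullet> h) (at_right 0)"
proof (rule tendstoI)
  fix \<epsilon> :: real assume \<epsilon>: "0 < \<epsilon>"
  define C where "C = 2 * (norm h + norm k) * norm h + 1"
  have C: "1 \<le> C" by (simp add: C_def)
  then have "0 < \<epsilon> / C" using \<epsilon> by simp
  with g_deriv[of x, unfolded has_derivative_at_alt] obtain d where d: "0 < d"
    and remainder: "\<And>y. norm y < d \<Longrightarrow> norm (g (x + y) - g x - H x *v y) \<le> \<epsilon> / C * norm y"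
    by (metis add_diff_cancel_left' add.commute)
  show "\<forall>\<^sub>F t in at_right 0. dist ((f (x + t *\<^sub>R h + t *\<^sub>R k) - f (x + t *\<^sub>R h) - f (x + t *\<^sub>R k) + f x) / t\<^sup>2)
      ((H x *v k) \<bullet> h) < \<epsilon>"
    unfolding eventually_at_right_field
  proof (intro exI[of _ "d / (norm h + norm k + 1)"] conjI allI impI)
    show "0 < d / (norm h + norm k + 1)" using d by (simp add: add_nonneg_pos)
    fix t :: real assume "0 < t" "t < d / (norm h + norm k + 1)"
    then have "t * (norm h + norm k) < d"
      by (smt (verit, best) mult_left_mono norm_ge_zero pos_less_divide_eq)
    from second_difference_remainder_le[OF f_deriv remainder \<open>0 < t\<close> this] \<open>0 < t\<close> \<open>0 < \<epsilon> / C\<close>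
    have "\<bar>(f (x + t *\<^sub>R h + t *\<^sub>R k) - f (x + t *\<^sub>R h) - f (x + t *\<^sub>R k) + f x) / t\<^sup>2 - (H x *v k) \<bullet> h\<bar>
        \<le> (\<epsilon> / C) * (C - 1)"
      by (simp add: C_def field_simps abs_divide power2_eq_square)
    also have "\<dots> < \<epsilon>" using \<epsilon> C by (simp add: field_simps)
    finally show "dist ((f (x + t *\<^sub>R h + t *\<^sub>R k) - f (x + t *\<^sub>R h) - f (x + t *\<^sub>R k) + f x) / t\<^sup>2)
        ((H x *v k) \<bullet> h) < \<epsilon>"
      by (simp add: dist_real_def)
  qed
qed

lemma hessian_symmetric:
  fixes f :: "real^'n \<Rightarrow> real" and g :: "real^'n \<Rightarrow> real^'n" and H :: "real^'n \<Rightarrow> real^'n^'n"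
  assumes "\<And>w. (f has_derivative (\<lambda>h. g w \<bullet> h)) (at w)"
    and "\<And>w. (g has_derivative (\<lambda>h. H w *v h)) (at w)"
  shows "(H x *v k) \<bullet> h = (H x *v h) \<bullet> k"
  using second_difference_tendsto[OF assms, of x k h]
  by (intro tendsto_unique[OF trivial_limit_at_right_real second_difference_tendsto[OF assms, of x h k]])
     (simp add: algebra_simps)

lemma matrix_vector_mult_mat: "(mat m :: real^'n^'n) *v y = m *\<^sub>R y"
  by (simp add: vec_eq_iff matrix_vector_mult_def mat_def if_distrib if_distribR cong: if_cong)

lemma norm_matrix_vector_le_onorm:
  fixes A :: "real^'n^'m"
  shows "norm (A *v x) \<le> onorm (\<lambda>x. A *v x) * norm x"
  using onorm[OF matrix_vector_mul_bounded_linear[of A]] by simp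

lemma bounded_linear_matrix_vector_mult_left: "bounded_linear (\<lambda>A :: real^'n^'m. A *v d)"
  unfolding linear_conv_bounded_linear[symmetric]
  by (rule linearI) (simp_all add: matrix_vector_mult_add_rdistrib scaleR_matrix_vector_assoc)

lemma bounded_linear_quadratic_form: "bounded_linear (\<lambda>A :: real^'n^'n. (A *v d) \<bullet> d)"
  unfolding linear_conv_bounded_linear[symmetric]
  by (rule linearI) (simp_all add: matrix_vector_mult_add_rdistrib inner_add_left
      scaleR_matrix_vector_assoc[symmetric])

lemma sum_matrix_vector_mult: "(\<Sum>i\<in>A. B i) *v (d :: real^'n) = (\<Sum>i\<in>A. (B i :: real^'n^'m) *v d)"
  by (induction A rule: infinite_finite_induct) (simp_all add: matrix_vector_mult_add_rdistrib)

lemma matrix_inv_left: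
  fixes A :: "real^'n^'n"
  assumes "invertible A"
  shows "matrix_inv A ** A = mat 1"
  using assms unfolding invertible_def matrix_inv_def by (rule someI2_ex) auto

lemma matrix_inv_right:
  fixes A :: "real^'n^'n"
  assumes "invertible A"
  shows "A ** matrix_inv A = mat 1"
  using assms unfolding invertible_def matrix_inv_def by (rule someI2_ex) auto

lemma loewner_le_mat_norm_ge:
  fixes A :: "real^'n^'n"
  assumes "loewner_le (mat m) A"
  shows "m * norm y \<le> norm (A *v y)"
proof (cases "y = 0")
  case False
  have "m * (norm y)\<^sup>2 \<le> y \<bullet> (A *v y)"
    using assms unfolding loewner_le_def by (simp add: matrix_vector_mult_mat power2_norm_eq_inner)
  also have "\<dots> \<le> norm y * norm (A *v y)" by (rule Cauchy_Schwarz_ineq2[THEN abs_le_D1])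
  finally show ?thesis using False by (simp add: power2_eq_square)
qed simp

lemma loewner_le_mat_invertible:
  fixes A :: "real^'n^'n"
  assumes "loewner_le (mat m) A" "0 < m"
  shows "invertible A"
proof -
  have "inj ((*v) A)" unfolding vec.inj_iff_eq_0
    using loewner_le_mat_norm_ge[OF assms(1)] assms(2)
    by (metis mult_le_0_iff norm_eq_zero norm_ge_zero norm_zero not_le order_antisym)
  then show ?thesis using invertible_left_inverse matrix_left_invertible_injective by blast
qed

lemma norm_matrix_inv_le:
  fixes A :: "real^'n^'n"
  assumes "loewner_le (mat m) A" "0 < m"
  shows "norm (matrix_inv A *v x) \<le> norm x / m"
proof -
  have "A *v (matrix_inv A *v x) = x"
    using matrix_inv_right[OF loewner_le_mat_invertible[OF assms]] by (simp add: matrix_vector_mul_assoc)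
  then show ?thesis
    using loewner_le_mat_norm_ge[OF assms(1), of "matrix_inv A *v x"] assms(2) by (simp add: field_simps)
qed

section \<open>Measurability of matrix operations\<close>

lemma borel_measurable_vec_iff:
  fixes f :: "'b \<Rightarrow> 'c::euclidean_space^'n"
  shows "f \<in> borel_measurable N \<longleftrightarrow> (\<forall>i. (\<lambda>x. f x $ i) \<in> borel_measurable N)"
proof safe
  fix i assume "f \<in> borel_measurable N"
  moreover have "continuous_on UNIV (\<lambda>x::'c^'n. x $ i)" by (intro continuous_intros)
  ultimately show "(\<lambda>x. f x $ i) \<in> borel_measurable N"
    using borel_measurable_continuous_on by blast
next
  assume comp: "\<forall>i. (\<lambda>x. f x $ i) \<in> borel_measurable N"
  show "f \<in> borel_measurable N"
    unfolding borel_measurable_euclidean_space[where f=f]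
  proof
    fix b :: "'c^'n" assume "b \<in> Basis"
    then obtain i u where b: "b = axis i u" "u \<in> Basis" unfolding Basis_vec_def by auto
    have "(\<lambda>x. f x $ i \<bullet> u) \<in> borel_measurable N" using comp by (intro borel_measurable_inner) auto
    then show "(\<lambda>x. f x \<bullet> b) \<in> borel_measurable N" using b by (simp add: inner_axis)
  qed
qed

lemma borel_measurable_matrix_entry:
  fixes A :: "'b \<Rightarrow> real^'n^'m"
  assumes "A \<in> borel_measurable N"
  shows "(\<lambda>x. A x $ i $ j) \<in> borel_measurable N"
  using assms borel_measurable_vec_iff[of A] borel_measurable_vec_iff[of "\<lambda>x. A x $ i"] by blast

lemma borel_measurable_matrix_vector_mult:
  fixes A :: "'b \<Rightarrow> real^'n^'m" and v :: "'b \<Rightarrow> real^'n"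
  assumes "A \<in> borel_measurable N" "v \<in> borel_measurable N"
  shows "(\<lambda>x. A x *v v x) \<in> borel_measurable N"
  unfolding borel_measurable_vec_iff[of "\<lambda>x. A x *v v x"] matrix_vector_mult_def
  using assms(2) by (auto simp: borel_measurable_vec_iff
      intro!: borel_measurable_sum borel_measurable_times borel_measurable_matrix_entry[OF assms(1)])

lemma borel_measurable_det:
  fixes A :: "'b \<Rightarrow> real^'n^'n"
  assumes "A \<in> borel_measurable N"
  shows "(\<lambda>x. det (A x)) \<in> borel_measurable N"
  unfolding det_def
  by (intro borel_measurable_sum borel_measurable_times borel_measurable_prod
        borel_measurable_matrix_entry[OF assms] measurable_const) auto

text \<open>Cramer's rule gives a formula for \<open>matrix_inv A *v b\<close> that is visibly measurable.\<close>
definition cramer_vec :: "real^'n^'n \<Rightarrow> real^'n \<Rightarrow> real^'n" where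
  "cramer_vec A b = (\<chi> k. det (\<chi> i j. if j = k then b $ i else A $ i $ j) / det A)"

lemma matrix_inv_mult_eq_cramer_vec:
  fixes A :: "real^'n^'n"
  assumes "invertible A"
  shows "matrix_inv A *v b = cramer_vec A b"
proof -
  have "A *v (matrix_inv A *v b) = b"
    using matrix_inv_right[OF assms] by (simp add: matrix_vector_mul_assoc)
  then show ?thesis
    using cramer[OF invertible_det_nz[THEN iffD1, OF assms]] unfolding cramer_vec_def by blast
qed

lemma borel_measurable_cramer_vec:
  fixes A :: "'b \<Rightarrow> real^'n^'n" and b :: "'b \<Rightarrow> real^'n"
  assumes "A \<in> borel_measurable N" "b \<in> borel_measurable N"
  shows "(\<lambda>x. cramer_vec (A x) (b x)) \<in> borel_measurable N"
proof -
  have "(\<lambda>x. (\<chi> i j. if j = k then b x $ i else A x $ i $ j) :: real^'n^'n) \<in> borel_measurable N" for k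
    using assms(2)
    by (auto simp: borel_measurable_vec_iff intro!: measurable_If borel_measurable_matrix_entry[OF assms(1)])
  then show ?thesis
    unfolding borel_measurable_vec_iff[of "\<lambda>x. cramer_vec (A x) (b x)"]
    by (auto simp: cramer_vec_def intro!: borel_measurable_divide borel_measurable_det assms(1))
qed

lemma gradient_zero_at_minimum:
  fixes F :: "real^'n \<Rightarrow> real"
  assumes "\<And>w. (F has_derivative (\<lambda>h. gF w \<bullet> h)) (at w)" "\<And>w. F ws \<le> F w"
  shows "gF ws = 0"
proof -
  have "(\<lambda>h. gF ws \<bullet> h) = (\<lambda>h. 0)"
    by (rule has_derivative_local_min[OF assms(1)]) (simp add: assms(2))
  then have "gF ws \<bullet> gF ws = 0" by metis
  then show ?thesis by simp
qed

lemma gradient_taylor_remainder_le: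
  fixes gF :: "real^'n \<Rightarrow> real^'n" and HF :: "real^'n \<Rightarrow> real^'n^'n"
  assumes gF_deriv: "\<And>w. (gF has_derivative (\<lambda>h. HF w *v h)) (at w)"
    and HF_lipschitz: "\<And>w u. onorm (\<lambda>x. (HF w - HF u) *v x) \<le> M * norm (w - u)"
    and "gF ws = 0" and "0 \<le> M"
  shows "norm (HF w *v (w - ws) - gF w) \<le> M / 2 * (norm (w - ws))\<^sup>2"
proof (cases "HF w *v (w - ws) - gF w = 0")
  case True
  with \<open>0 \<le> M\<close> show ?thesis by simp
next
  case False
  define d where "d = w - ws"
  define R where "R = HF w *v d - gF w"
  define u where "u = R /\<^sub>R norm R"
  \<comment> \<open>\<psi> 1 - \<psi> 0 is the component of the remainder along its own direction, minus the claimed bound\<close>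
  define \<psi> where "\<psi> t = u \<bullet> (t *\<^sub>R (HF w *v d) - gF (ws + t *\<^sub>R d)) - M * (norm d)\<^sup>2 * (t - t\<^sup>2 / 2)"
    for t :: real
  have "\<psi> 1 \<le> \<psi> 0"
  proof (rule DERIV_nonpos_imp_nonincreasing[of 0 1])
    fix t :: real assume t: "0 \<le> t" "t \<le> 1"
    have "((\<lambda>t. ws + t *\<^sub>R d) has_derivative (\<lambda>s. s *\<^sub>R d)) (at t)"
      by (auto intro!: derivative_eq_intros)
    from has_derivative_compose[OF this gF_deriv]
    have "((\<lambda>t. gF (ws + t *\<^sub>R d)) has_derivative (\<lambda>s. HF (ws + t *\<^sub>R d) *v (s *\<^sub>R d))) (at t)"
      by simp
    from bounded_linear.has_derivative[OF bounded_linear_inner_right this, of u]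
    have "((\<lambda>t. u \<bullet> gF (ws + t *\<^sub>R d)) has_real_derivative (u \<bullet> (HF (ws + t *\<^sub>R d) *v d))) (at t)"
      by (simp add: has_field_derivative_def matrix_vector_mult_scaleR mult_commute_abs)
    then have "(\<psi> has_real_derivative
        u \<bullet> ((HF w - HF (ws + t *\<^sub>R d)) *v d) - M * (norm d)\<^sup>2 * (1 - t)) (at t)"
      unfolding \<psi>_def inner_diff_right
      by (auto intro!: derivative_eq_intros simp: matrix_vector_mult_diff_rdistrib inner_diff_right)
    moreover have "u \<bullet> ((HF w - HF (ws + t *\<^sub>R d)) *v d) \<le> M * (norm d)\<^sup>2 * (1 - t)"
    proof -
      have "u \<bullet> ((HF w - HF (ws + t *\<^sub>R d)) *v d) \<le> norm ((HF w - HF (ws + t *\<^sub>R d)) *v d)"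
        using Cauchy_Schwarz_ineq2[of u] False by (simp add: u_def R_def d_def abs_le_iff)
      also have "\<dots> \<le> M * norm (w - (ws + t *\<^sub>R d)) * norm d"
        by (rule order_trans[OF norm_matrix_vector_le_onorm mult_right_mono[OF HF_lipschitz]]) simp
      also have "w - (ws + t *\<^sub>R d) = (1 - t) *\<^sub>R d" by (simp add: d_def algebra_simps)
      finally show ?thesis using t by (simp add: power2_eq_square mult_ac)
    qed
    ultimately show "\<exists>y. (\<psi> has_real_derivative y) (at t) \<and> y \<le> 0"
      by (intro exI conjI) (assumption, simp)
  qed simp
  moreover have "\<psi> 0 = 0" using \<open>gF ws = 0\<close> by (simp add: \<psi>_def)
  moreover have "u \<bullet> R = norm R"
    using False by (simp add: u_def R_def d_def power2_norm_eq_inner[symmetric] power2_eq_square)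
  then have "\<psi> 1 = norm R - M / 2 * (norm d)\<^sup>2" by (simp add: \<psi>_def R_def d_def inner_diff_right)
  ultimately show ?thesis by (simp add: R_def d_def)
qed

lemma newton_step_error_le:
  fixes H A :: "real^'n^'n"
  assumes "loewner_le (mat m) H" "0 < m"
  shows "norm (w - matrix_inv H *v g - ws)
    \<le> (norm ((H - A) *v (w - ws)) + norm (A *v (w - ws) - b) + norm (g - b)) / m"
proof -
  have "w - matrix_inv H *v g - ws = matrix_inv H *v (H *v (w - ws) - g)"
    using matrix_inv_left[OF loewner_le_mat_invertible[OF assms]]
    by (simp add: matrix_vector_mult_diff_distrib matrix_vector_mul_assoc)
  also have "H *v (w - ws) - g = (H - A) *v (w - ws) + (A *v (w - ws) - b) - (g - b)"
    by (simp add: matrix_vector_mult_diff_rdistrib)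
  finally have "norm (w - matrix_inv H *v g - ws)
      \<le> norm ((H - A) *v (w - ws) + (A *v (w - ws) - b) - (g - b)) / m"
    using norm_matrix_inv_le[OF assms] by simp
  also have "\<dots> \<le> (norm ((H - A) *v (w - ws)) + norm (A *v (w - ws) - b) + norm (g - b)) / m"
    using assms(2) by (intro divide_right_mono order_trans[OF norm_triangle_ineq4] add_right_mono
        norm_triangle_ineq) simp_all
  finally show ?thesis .
qed

lemma sample_mean_diff:
  fixes x :: "nat \<Rightarrow> 'a::real_vector"
  assumes "0 < n"
  shows "(1 / real n) *\<^sub>R (\<Sum>i<n. x i) - c = (1 / real n) *\<^sub>R (\<Sum>i<n. x i - c)"
  using assms by (simp add: sum_subtractf scaleR_diff_right sum_constant_scaleR)

lemma sample_mean_matrix_diff_mult: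
  fixes A :: "nat \<Rightarrow> real^'n^'m"
  assumes "0 < n"
  shows "((1 / real n) *\<^sub>R (\<Sum>i<n. A i) - B) *v d = (1 / real n) *\<^sub>R (\<Sum>i<n. (A i - B) *v d)"
  using sample_mean_diff[OF assms, of "\<lambda>i. A i *v d" "B *v d"]
  by (simp add: matrix_vector_mult_diff_rdistrib scaleR_matrix_vector_assoc[symmetric]
      sum_matrix_vector_mult)

section \<open>A quadratic recursion with superlinear convergence\<close>

lemma perturbed_contraction_tendsto_zero:
  fixes x c :: "nat \<Rightarrow> real"
  assumes x_nonneg: "\<And>k. 0 \<le> x k" and q: "0 \<le> q" "q < 1"
    and step: "\<And>k. x (Suc k) \<le> q * x k + c k" and c: "c \<longlonglongrightarrow> 0"
  shows "x \<longlonglongrightarrow> 0"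
proof (rule LIMSEQ_I)
  fix r :: real assume r: "0 < r"
  have "\<forall>\<^sub>F k in sequentially. c k < r * (1 - q) / 2"
    using c r q by (intro order_tendstoD) auto
  then obtain N where N: "\<And>k. N \<le> k \<Longrightarrow> c k < r * (1 - q) / 2"
    by (auto simp: eventually_sequentially)
  have tail: "x (N + k) \<le> q ^ k * x N + r / 2" for k
  proof (induction k)
    case (Suc k)
    have "x (N + Suc k) \<le> q * x (N + k) + c (N + k)" using step[of "N + k"] by simp
    also have "\<dots> \<le> q * (q ^ k * x N + r / 2) + r * (1 - q) / 2"
      using Suc.IH N[of "N + k"] q by (intro add_mono mult_left_mono) auto
    also have "\<dots> = q ^ Suc k * x N + r / 2" by (simp add: field_simps)
    finally show ?case .
  qed (use r in simp)
  have "(\<lambda>k. q ^ k * x N) \<longlonglongrightarrow> 0 * x N"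
    by (intro tendsto_mult LIMSEQ_power_zero tendsto_const) (use q in auto)
  then have "\<forall>\<^sub>F k in sequentially. q ^ k * x N < r / 2" using r by (intro order_tendstoD) auto
  then obtain K where K: "\<And>k. K \<le> k \<Longrightarrow> q ^ k * x N < r / 2" by (auto simp: eventually_sequentially)
  show "\<exists>no. \<forall>n\<ge>no. norm (x n - 0) < r"
  proof (intro exI allI impI)
    fix n assume "N + K \<le> n"
    then have "K \<le> n - N" "N + (n - N) = n" by linarith+
    then have "x n < r" using tail[of "n - N"] K[of "n - N"] by simp
    then show "norm (x n - 0) < r" using x_nonneg[of n] by simp
  qed
qed

primrec quadratic_majorant :: "real \<Rightarrow> real \<Rightarrow> (nat \<Rightarrow> real) \<Rightarrow> (nat \<Rightarrow> real) \<Rightarrow> nat \<Rightarrow> real" where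
  "quadratic_majorant A t0 b c 0 = t0"
| "quadratic_majorant A t0 b c (Suc k) =
     A * (quadratic_majorant A t0 b c k)\<^sup>2 + b k * quadratic_majorant A t0 b c k + c k"

locale quadratic_recursion =
  fixes A t0 :: real and b c :: "nat \<Rightarrow> real"
  assumes A_pos: "0 < A" and t0_pos: "0 < t0" and A_t0: "A * t0 \<le> 1/6"
    and b_nonneg: "\<And>k. 0 \<le> b k" and b_le: "\<And>k. b k \<le> 1/4"
    and c_nonneg: "\<And>k. 0 \<le> c k" and c_le: "\<And>k. c k \<le> t0 / 2"
begin

abbreviation \<tau> where "\<tau> \<equiv> quadratic_majorant A t0 b c"

lemma majorant_pos_le: "0 < \<tau> k \<and> \<tau> k \<le> t0"
proof (induction k)
  case (Suc k)
  have "A * (\<tau> k)\<^sup>2 \<le> A * t0 * t0"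
    using Suc A_pos by (simp add: power2_eq_square mult_mono mult.assoc)
  also have "\<dots> \<le> t0 / 6" using A_t0 t0_pos by (simp add: mult_right_mono)
  finally have "A * (\<tau> k)\<^sup>2 \<le> t0 / 6" .
  moreover have "b k * \<tau> k \<le> 1/4 * t0"
    using b_nonneg[of k] b_le[of k] Suc by (intro mult_mono) auto
  moreover have "0 < A * (\<tau> k)\<^sup>2" using A_pos Suc by simp
  moreover have "0 \<le> b k * \<tau> k" using b_nonneg[of k] Suc by simp
  ultimately show ?case using c_le[of k] c_nonneg[of k] Suc by simp
qed (use t0_pos in simp)

lemma majorant_contraction: "\<tau> (Suc k) \<le> 5/12 * \<tau> k + c k"
proof -
  have "A * (\<tau> k)\<^sup>2 \<le> A * t0 * \<tau> k"
    using majorant_pos_le[of k] A_pos by (simp add: power2_eq_square mult_right_mono)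
  also have "\<dots> \<le> 1/6 * \<tau> k" using A_t0 majorant_pos_le[of k] by (simp add: mult_right_mono)
  moreover have "b k * \<tau> k \<le> 1/4 * \<tau> k"
    using b_le[of k] majorant_pos_le[of k] by (intro mult_right_mono) auto
  ultimately show ?thesis by simp
qed

lemma majorant_dominates:
  assumes "\<And>k. 0 \<le> E k" "E 0 \<le> t0" "\<And>k. E (Suc k) \<le> A * (E k)\<^sup>2 + b k * E k + c k"
  shows "E k \<le> \<tau> k"
proof (induction k)
  case (Suc k)
  have "A * (E k)\<^sup>2 \<le> A * (\<tau> k)\<^sup>2" using Suc assms(1)[of k] A_pos by (simp add: power_mono)
  moreover have "b k * E k \<le> b k * \<tau> k" using Suc b_nonneg[of k] by (simp add: mult_left_mono)
  ultimately show ?case using assms(3)[of k] by simp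
qed (use assms(2) in simp)

text \<open>The ratio of consecutive terms is \<open>A \<tau>\<^sub>k + b\<^sub>k + c\<^sub>k/\<tau>\<^sub>k\<close>; the last term is controlled
  because \<open>\<tau>\<^sub>k \<ge> c\<^sub>k\<^sub>-\<^sub>1\<close>, so it suffices that \<open>c\<close> itself decays superlinearly.\<close>
lemma majorant_ratio_tendsto_zero:
  assumes b: "b \<longlonglongrightarrow> 0"
    and \<rho>: "\<And>k. 0 \<le> \<rho> k" "\<And>k. c (Suc k) \<le> \<rho> k * c k" "\<rho> \<longlonglongrightarrow> 0"
  shows "(\<lambda>k. \<tau> (Suc k) / \<tau> k) \<longlonglongrightarrow> 0"
proof -
  have upper: "(\<lambda>k. \<rho> k * (t0 / 2)) \<longlonglongrightarrow> 0"
    using tendsto_mult_right[OF \<rho>(3), of "t0 / 2"] by simp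
  have c_Suc: "c (Suc k) \<le> \<rho> k * (t0 / 2)" for k
    using order_trans[OF \<rho>(2) mult_left_mono[OF c_le \<rho>(1)]] .
  have "(\<lambda>k. c (Suc k)) \<longlonglongrightarrow> 0"
    by (rule tendsto_sandwich[OF _ _ tendsto_const upper]) (intro always_eventually allI c_nonneg c_Suc)+
  then have "c \<longlonglongrightarrow> 0" by (rule LIMSEQ_imp_Suc)
  moreover have "0 \<le> \<tau> k" for k using majorant_pos_le[of k] by simp
  ultimately have \<tau>: "\<tau> \<longlonglongrightarrow> 0"
    using majorant_contraction by (intro perturbed_contraction_tendsto_zero[of \<tau> "5/12"]) auto
  have ratio: "0 \<le> \<tau> (Suc (Suc k)) / \<tau> (Suc k) \<and>
      \<tau> (Suc (Suc k)) / \<tau> (Suc k) \<le> A * \<tau> (Suc k) + b (Suc k) + \<rho> k" for k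
  proof -
    have "c k \<le> \<tau> (Suc k)"
      using majorant_pos_le[of k] A_pos b_nonneg[of k] by simp
    then have "c (Suc k) \<le> \<rho> k * \<tau> (Suc k)"
      using order_trans[OF \<rho>(2) mult_left_mono[OF _ \<rho>(1)]] by blast
    then have "c (Suc k) / \<tau> (Suc k) \<le> \<rho> k"
      using majorant_pos_le[of "Suc k"] by (simp add: divide_le_eq)
    moreover have "\<tau> (Suc (Suc k)) / \<tau> (Suc k)
        = A * \<tau> (Suc k) + b (Suc k) + c (Suc k) / \<tau> (Suc k)"
      using majorant_pos_le[of "Suc k"]
      by (simp only: quadratic_majorant.simps(2)[of _ _ _ _ "Suc k"]) (simp add: power2_eq_square field_simps)
    moreover have "0 \<le> \<tau> (Suc (Suc k)) / \<tau> (Suc k)"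
      using majorant_pos_le[of "Suc k"] majorant_pos_le[of "Suc (Suc k)"]
      by (simp del: quadratic_majorant.simps)
    ultimately show ?thesis by linarith
  qed
  have "(\<lambda>k. A * \<tau> (Suc k) + b (Suc k) + \<rho> k) \<longlonglongrightarrow> A * 0 + 0 + 0"
    by (intro tendsto_intros \<rho>(3) LIMSEQ_Suc \<tau> b)
  then have upper2: "(\<lambda>k. A * \<tau> (Suc k) + b (Suc k) + \<rho> k) \<longlonglongrightarrow> 0" by simp
  have "(\<lambda>k. \<tau> (Suc (Suc k)) / \<tau> (Suc k)) \<longlonglongrightarrow> 0"
    by (rule tendsto_sandwich[OF _ _ tendsto_const upper2]) (use ratio in \<open>simp_all add: always_eventually\<close>)
  then show ?thesis by (rule LIMSEQ_imp_Suc)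
qed

end

section \<open>Sample means of independent random vectors\<close>

lemma (in prob_space) square_expectation_le:
  fixes f :: "'a \<Rightarrow> real"
  assumes "integrable M f" "integrable M (\<lambda>x. (f x)\<^sup>2)"
  shows "(expectation f)\<^sup>2 \<le> expectation (\<lambda>x. (f x)\<^sup>2)"
  using variance_eq[OF assms] variance_positive[of f] by simp

lemma (in prob_space) integral_square_sum_indep:
  fixes X :: "'i \<Rightarrow> 'a \<Rightarrow> real"
  assumes "finite A"
    and indep: "\<And>i j. i \<in> A \<Longrightarrow> j \<in> A \<Longrightarrow> i \<noteq> j \<Longrightarrow> indep_var borel (X i) borel (X j)"
    and int: "\<And>i. i \<in> A \<Longrightarrow> integrable M (X i)"
    and int_sq: "\<And>i. i \<in> A \<Longrightarrow> integrable M (\<lambda>\<omega>. (X i \<omega>)\<^sup>2)"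
    and mean: "\<And>i. i \<in> A \<Longrightarrow> expectation (X i) = 0"
  shows "integrable M (\<lambda>\<omega>. (\<Sum>i\<in>A. X i \<omega>)\<^sup>2)"
    and "expectation (\<lambda>\<omega>. (\<Sum>i\<in>A. X i \<omega>)\<^sup>2) = (\<Sum>i\<in>A. expectation (\<lambda>\<omega>. (X i \<omega>)\<^sup>2))"
proof -
  have square: "(\<Sum>i\<in>A. X i \<omega>)\<^sup>2 = (\<Sum>i\<in>A. \<Sum>j\<in>A. X i \<omega> * X j \<omega>)" for \<omega>
    by (simp add: power2_eq_square sum_product)
  have cross: "integrable M (\<lambda>\<omega>. X i \<omega> * X j \<omega>) \<and>
      expectation (\<lambda>\<omega>. X i \<omega> * X j \<omega>) = (if i = j then expectation (\<lambda>\<omega>. (X i \<omega>)\<^sup>2) else 0)"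
    if "i \<in> A" "j \<in> A" for i j
  proof (cases "i = j")
    case True then show ?thesis using int_sq[OF that(1)] by (simp add: power2_eq_square)
  next
    case False
    show ?thesis
      using indep_var_integrable[OF indep[OF that False] int[OF that(1)] int[OF that(2)]]
        indep_var_lebesgue_integral[OF indep[OF that False] int[OF that(1)] int[OF that(2)]]
        mean that False by simp
  qed
  show "integrable M (\<lambda>\<omega>. (\<Sum>i\<in>A. X i \<omega>)\<^sup>2)"
    unfolding square using cross by (intro Bochner_Integration.integrable_sum) blast
  have "expectation (\<lambda>\<omega>. \<Sum>i\<in>A. \<Sum>j\<in>A. X i \<omega> * X j \<omega>)
      = (\<Sum>i\<in>A. \<Sum>j\<in>A. expectation (\<lambda>\<omega>. X i \<omega> * X j \<omega>))"
    using cross by (simp add: integral_sum Bochner_Integration.integrable_sum)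
  also have "\<dots> = (\<Sum>i\<in>A. \<Sum>j\<in>A. (if i = j then expectation (\<lambda>\<omega>. (X i \<omega>)\<^sup>2) else 0))"
    using cross by (intro sum.cong refl) auto
  also have "\<dots> = (\<Sum>i\<in>A. expectation (\<lambda>\<omega>. (X i \<omega>)\<^sup>2))"
    using \<open>finite A\<close> by (simp add: sum.delta)
  finally show "expectation (\<lambda>\<omega>. (\<Sum>i\<in>A. X i \<omega>)\<^sup>2) = (\<Sum>i\<in>A. expectation (\<lambda>\<omega>. (X i \<omega>)\<^sup>2))"
    unfolding square .
qed

lemma norm_power2_vec_eq_sum: "(norm (x :: real^'n))\<^sup>2 = (\<Sum>c\<in>UNIV. (x $ c)\<^sup>2)"
  unfolding power2_norm_eq_inner inner_vec_def by (simp add: power2_eq_square)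

lemma (in prob_space) integral_norm_square_sum_indep:
  fixes Y :: "'i \<Rightarrow> 'a \<Rightarrow> real^'n"
  assumes "finite A"
    and indep: "\<And>i j c. i \<in> A \<Longrightarrow> j \<in> A \<Longrightarrow> i \<noteq> j \<Longrightarrow>
      indep_var borel (\<lambda>\<omega>. Y i \<omega> $ c) borel (\<lambda>\<omega>. Y j \<omega> $ c)"
    and meas: "\<And>i. i \<in> A \<Longrightarrow> Y i \<in> borel_measurable M"
    and int: "\<And>i. i \<in> A \<Longrightarrow> integrable M (Y i)"
    and int_sq: "\<And>i. i \<in> A \<Longrightarrow> integrable M (\<lambda>\<omega>. (norm (Y i \<omega>))\<^sup>2)"
    and mean: "\<And>i. i \<in> A \<Longrightarrow> expectation (Y i) = 0"
  shows "integrable M (\<lambda>\<omega>. (norm (\<Sum>i\<in>A. Y i \<omega>))\<^sup>2)"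
    and "expectation (\<lambda>\<omega>. (norm (\<Sum>i\<in>A. Y i \<omega>))\<^sup>2) = (\<Sum>i\<in>A. expectation (\<lambda>\<omega>. (norm (Y i \<omega>))\<^sup>2))"
proof -
  have comp_int: "integrable M (\<lambda>\<omega>. Y i \<omega> $ c)" if "i \<in> A" for i c
    using integrable_bounded_linear[OF bounded_linear_vec_nth int[OF that]] by simp
  have comp_int_sq: "integrable M (\<lambda>\<omega>. (Y i \<omega> $ c)\<^sup>2)" if "i \<in> A" for i c
  proof (rule Bochner_Integration.integrable_bound[OF int_sq[OF that]])
    have "(\<lambda>\<omega>. Y i \<omega> $ c) \<in> borel_measurable M"
      using meas[OF that] borel_measurable_vec_iff by blast
    then show "(\<lambda>\<omega>. (Y i \<omega> $ c)\<^sup>2) \<in> borel_measurable M" by measurable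
    have "(Y i \<omega> $ c)\<^sup>2 \<le> (norm (Y i \<omega>))\<^sup>2" for \<omega>
      using component_le_norm_cart[of "Y i \<omega>" c] abs_le_square_iff[of "Y i \<omega> $ c" "norm (Y i \<omega>)"]
      by simp
    then show "AE \<omega> in M. norm ((Y i \<omega> $ c)\<^sup>2) \<le> norm ((norm (Y i \<omega>))\<^sup>2)" by simp
  qed
  have comp_mean: "expectation (\<lambda>\<omega>. Y i \<omega> $ c) = 0" if "i \<in> A" for i c
    using integral_bounded_linear[OF bounded_linear_vec_nth int[OF that], of c] mean[OF that] by simp
  note comp = integral_square_sum_indep[OF \<open>finite A\<close> indep comp_int comp_int_sq comp_mean]
  have norm_sum: "(norm (\<Sum>i\<in>A. Y i \<omega>))\<^sup>2 = (\<Sum>c\<in>UNIV. (\<Sum>i\<in>A. Y i \<omega> $ c)\<^sup>2)" for \<omega>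
    by (simp add: norm_power2_vec_eq_sum sum_component)
  show "integrable M (\<lambda>\<omega>. (norm (\<Sum>i\<in>A. Y i \<omega>))\<^sup>2)"
    unfolding norm_sum using comp(1) by (intro Bochner_Integration.integrable_sum) auto
  have "expectation (\<lambda>\<omega>. (norm (\<Sum>i\<in>A. Y i \<omega>))\<^sup>2)
      = (\<Sum>c\<in>UNIV. \<Sum>i\<in>A. expectation (\<lambda>\<omega>. (Y i \<omega> $ c)\<^sup>2))"
    unfolding norm_sum using comp by (simp add: integral_sum)
  also have "\<dots> = (\<Sum>i\<in>A. expectation (\<lambda>\<omega>. (norm (Y i \<omega>))\<^sup>2))"
    by (subst sum.swap) (simp add: integral_sum comp_int_sq norm_power2_vec_eq_sum)
  finally show "expectation (\<lambda>\<omega>. (norm (\<Sum>i\<in>A. Y i \<omega>))\<^sup>2)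
      = (\<Sum>i\<in>A. expectation (\<lambda>\<omega>. (norm (Y i \<omega>))\<^sup>2))" .
qed

lemma (in prob_space) nn_integral_norm_mean_indep_le:
  fixes Y :: "'i \<Rightarrow> 'a \<Rightarrow> real^'n"
  assumes "finite A" "A \<noteq> {}"
    and indep: "\<And>i j c. i \<in> A \<Longrightarrow> j \<in> A \<Longrightarrow> i \<noteq> j \<Longrightarrow>
      indep_var borel (\<lambda>\<omega>. Y i \<omega> $ c) borel (\<lambda>\<omega>. Y j \<omega> $ c)"
    and meas: "\<And>i. i \<in> A \<Longrightarrow> Y i \<in> borel_measurable M"
    and int: "\<And>i. i \<in> A \<Longrightarrow> integrable M (Y i)"
    and int_sq: "\<And>i. i \<in> A \<Longrightarrow> integrable M (\<lambda>\<omega>. (norm (Y i \<omega>))\<^sup>2)"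
    and mean: "\<And>i. i \<in> A \<Longrightarrow> expectation (Y i) = 0"
    and var: "\<And>i. i \<in> A \<Longrightarrow> expectation (\<lambda>\<omega>. (norm (Y i \<omega>))\<^sup>2) \<le> V"
  shows "(\<integral>\<^sup>+\<omega>. ennreal (norm ((1 / real (card A)) *\<^sub>R (\<Sum>i\<in>A. Y i \<omega>))) \<partial>M)
    \<le> ennreal (sqrt (V / real (card A)))"
proof -
  define n where "n = real (card A)"
  define S where "S \<omega> = (\<Sum>i\<in>A. Y i \<omega>)" for \<omega>
  have n: "0 < n" using assms(1,2) by (simp add: n_def card_gt_0_iff)
  have sq: "integrable M (\<lambda>\<omega>. (norm (S \<omega>))\<^sup>2)"
    "expectation (\<lambda>\<omega>. (norm (S \<omega>))\<^sup>2) = (\<Sum>i\<in>A. expectation (\<lambda>\<omega>. (norm (Y i \<omega>))\<^sup>2))"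
    using integral_norm_square_sum_indep[OF assms(1) indep meas int int_sq mean] by (simp_all add: S_def)
  have "S \<in> borel_measurable M" unfolding S_def using meas by (intro borel_measurable_sum) auto
  then have "(\<lambda>\<omega>. norm (S \<omega>)) \<in> borel_measurable M" by measurable
  then have S_int: "integrable M (\<lambda>\<omega>. norm (S \<omega>))"
    using sq(1) by (rule square_integrable_imp_integrable)
  have "(expectation (\<lambda>\<omega>. norm (S \<omega>)))\<^sup>2 \<le> expectation (\<lambda>\<omega>. (norm (S \<omega>))\<^sup>2)"
    using square_expectation_le[OF S_int] sq(1) by simp
  also have "\<dots> \<le> n * V"
    using sum_mono[of A _ "\<lambda>_. V", OF var] by (simp add: sq(2) n_def)
  finally have "expectation (\<lambda>\<omega>. norm (S \<omega>)) / n \<le> sqrt (n * V) / n"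
    using n by (intro divide_right_mono real_le_rsqrt) simp_all
  also have "sqrt (n * V) / n = sqrt (n * V / n\<^sup>2)"
    using n by (simp add: real_sqrt_divide)
  also have "\<dots> = sqrt (V / n)"
    using n by (simp add: power2_eq_square)
  finally have bound: "expectation (\<lambda>\<omega>. norm ((1 / n) *\<^sub>R S \<omega>)) \<le> sqrt (V / n)"
    using n by simp
  have "(\<integral>\<^sup>+\<omega>. ennreal (norm ((1 / n) *\<^sub>R S \<omega>)) \<partial>M)
      = ennreal (expectation (\<lambda>\<omega>. norm ((1 / n) *\<^sub>R S \<omega>)))"
    using S_int by (intro nn_integral_eq_integral) simp_all
  also have "\<dots> \<le> ennreal (sqrt (V / n))" using bound by (rule ennreal_leI)
  finally show ?thesis by (simp only: S_def n_def)
qed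

lemma (in prob_space) nn_integral_indep_var:
  assumes indep: "indep_var MU U MV V"
    and F: "(\<lambda>p. F (fst p) (snd p)) \<in> borel_measurable (MU \<Otimes>\<^sub>M MV)"
  shows "(\<integral>\<^sup>+\<omega>. F (U \<omega>) (V \<omega>) \<partial>M) = (\<integral>\<^sup>+u. (\<integral>\<^sup>+\<omega>. F u (V \<omega>) \<partial>M) \<partial>distr M MU U)"
proof -
  have U: "U \<in> measurable M MU" and V: "V \<in> measurable M MV"
    and joint: "distr M MU U \<Otimes>\<^sub>M distr M MV V = distr M (MU \<Otimes>\<^sub>M MV) (\<lambda>x. (U x, V x))"
    using indep_var_distribution_eq[THEN iffD1, OF indep] by simp_all
  interpret DV: prob_space "distr M MV V" by (rule prob_space_distr[OF V])
  have "(\<integral>\<^sup>+\<omega>. F (U \<omega>) (V \<omega>) \<partial>M) = (\<integral>\<^sup>+p. F (fst p) (snd p) \<partial>distr M (MU \<Otimes>\<^sub>M MV) (\<lambda>x. (U x, V x)))"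
    using F by (subst nn_integral_distr) (simp_all add: measurable_Pair[OF U V])
  also have "\<dots> = (\<integral>\<^sup>+u. (\<integral>\<^sup>+v. F u v \<partial>distr M MV V) \<partial>distr M MU U)"
    unfolding joint[symmetric] using F by (subst DV.nn_integral_fst[symmetric]) simp_all
  also have "\<dots> = (\<integral>\<^sup>+u. (\<integral>\<^sup>+\<omega>. F u (V \<omega>) \<partial>M) \<partial>distr M MU U)"
  proof (intro nn_integral_cong)
    fix u assume "u \<in> space (distr M MU U)"
    then have "u \<in> space MU" by simp
    from measurable_compose[OF measurable_Pair[OF measurable_const[OF this] measurable_ident_sets[OF refl]] F]
    have "(\<lambda>v. F u v) \<in> borel_measurable MV" by simp
    then show "(\<integral>\<^sup>+v. F u v \<partial>distr M MV V) = (\<integral>\<^sup>+\<omega>. F u (V \<omega>) \<partial>M)"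
      by (simp add: nn_integral_distr[OF V])
  qed
  finally show ?thesis .
qed

text \<open>Fresh samples are independent of a function \<open>G\<close> of the earlier ones, so a bound on
  their expectation that holds for every fixed argument \<open>w\<close> survives substituting \<open>w := G\<close>.\<close>
lemma (in prob_space) nn_integral_indep_substitute_le:
  fixes Z :: "'i \<Rightarrow> 'a \<Rightarrow> 'z" and G :: "('i \<Rightarrow> 'z) \<Rightarrow> 'w::topological_space"
    and h :: "'w \<Rightarrow> ('i \<Rightarrow> 'z) \<Rightarrow> ennreal" and \<beta> :: "'w \<Rightarrow> ennreal"
  assumes indep: "indep_vars (\<lambda>_. P) Z I"
    and JB: "J \<subseteq> I" "B \<subseteq> I" "J \<inter> B = {}"
    and G: "G \<in> borel_measurable (PiM J (\<lambda>_. P))"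
    and h: "(\<lambda>p. h (fst p) (snd p)) \<in> borel_measurable (borel \<Otimes>\<^sub>M PiM B (\<lambda>_. P))"
    and bound: "\<And>w. (\<integral>\<^sup>+\<omega>. h w (restrict (\<lambda>j. Z j \<omega>) B) \<partial>M) \<le> \<beta> w"
    and \<beta>: "\<beta> \<in> borel_measurable borel"
  shows "(\<integral>\<^sup>+\<omega>. h (G (restrict (\<lambda>j. Z j \<omega>) J)) (restrict (\<lambda>j. Z j \<omega>) B) \<partial>M)
         \<le> (\<integral>\<^sup>+\<omega>. \<beta> (G (restrict (\<lambda>j. Z j \<omega>) J)) \<partial>M)"
proof -
  let ?U = "\<lambda>\<omega>. restrict (\<lambda>j. Z j \<omega>) J"
  have UV: "indep_var (PiM J (\<lambda>_. P)) ?U (PiM B (\<lambda>_. P)) (\<lambda>\<omega>. restrict (\<lambda>j. Z j \<omega>) B)"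
    by (rule indep_var_restrict[OF indep JB(3,1,2)])
  then have U: "?U \<in> measurable M (PiM J (\<lambda>_. P))"
    using indep_var_distribution_eq by blast
  have "(\<lambda>p. (G (fst p), snd p)) \<in> measurable (PiM J (\<lambda>_. P) \<Otimes>\<^sub>M PiM B (\<lambda>_. P)) (borel \<Otimes>\<^sub>M PiM B (\<lambda>_. P))"
    by (intro measurable_Pair measurable_compose[OF measurable_fst G] measurable_snd)
  from measurable_compose[OF this h]
  have "(\<integral>\<^sup>+\<omega>. h (G (?U \<omega>)) (restrict (\<lambda>j. Z j \<omega>) B) \<partial>M)
      = (\<integral>\<^sup>+u. (\<integral>\<^sup>+\<omega>. h (G u) (restrict (\<lambda>j. Z j \<omega>) B) \<partial>M) \<partial>distr M (PiM J (\<lambda>_. P)) ?U)"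
    by (intro nn_integral_indep_var[OF UV]) (simp add: comp_def)
  also have "\<dots> \<le> (\<integral>\<^sup>+u. \<beta> (G u) \<partial>distr M (PiM J (\<lambda>_. P)) ?U)"
    by (intro nn_integral_mono bound)
  also have "\<dots> = (\<integral>\<^sup>+\<omega>. \<beta> (G (?U \<omega>)) \<partial>M)"
    using measurable_compose[OF G \<beta>] by (simp add: nn_integral_distr[OF U] comp_def)
  finally show ?thesis .
qed

lemma (in prob_space) nn_integral_norm_sample_mean_le:
  fixes Z :: "'i \<Rightarrow> 'a \<Rightarrow> 'z" and \<phi> :: "'z \<Rightarrow> real^'n" and a :: "nat \<Rightarrow> 'i"
  assumes indep: "indep_vars (\<lambda>_. P) Z I"
    and Z: "\<And>j. j \<in> I \<Longrightarrow> Z j \<in> measurable M P" "\<And>j. j \<in> I \<Longrightarrow> distr M P (Z j) = P"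
    and a: "inj_on a {..<n}" "a ` {..<n} \<subseteq> I" and "0 < n"
    and \<phi>: "\<phi> \<in> borel_measurable P" "integrable P \<phi>" "integrable P (\<lambda>z. (norm (\<phi> z))\<^sup>2)"
    and mean: "(\<integral>z. \<phi> z \<partial>P) = 0" and var: "(\<integral>z. (norm (\<phi> z))\<^sup>2 \<partial>P) \<le> V"
  shows "(\<integral>\<^sup>+\<omega>. ennreal (norm ((1 / real n) *\<^sub>R (\<Sum>i<n. \<phi> (Z (a i) \<omega>)))) \<partial>M)
    \<le> ennreal (sqrt (V / real n))"
proof -
  have aI: "a i \<in> I" if "i < n" for i using a(2) that by auto
  have \<phi>_comp: "(\<lambda>z. \<phi> z $ c) \<in> borel_measurable P" for c
    using \<phi>(1) borel_measurable_vec_iff by blast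
  have indep_comp: "indep_var borel (\<lambda>\<omega>. \<phi> (Z (a i) \<omega>) $ c) borel (\<lambda>\<omega>. \<phi> (Z (a j) \<omega>) $ c)"
    if "i < n" "j < n" "i \<noteq> j" for i j c
  proof -
    have "a i \<noteq> a j" using a(1) that by (auto simp: inj_on_def)
    then have "indep_var (PiM {a i} (\<lambda>_. P)) (\<lambda>\<omega>. restrict (\<lambda>k. Z k \<omega>) {a i})
                         (PiM {a j} (\<lambda>_. P)) (\<lambda>\<omega>. restrict (\<lambda>k. Z k \<omega>) {a j})"
      using aI that by (intro indep_var_restrict[OF indep]) auto
    from indep_var_compose[OF this
        measurable_compose[OF measurable_component_singleton[of "a i" "{a i}" "\<lambda>_. P"] \<phi>_comp]
        measurable_compose[OF measurable_component_singleton[of "a j" "{a j}" "\<lambda>_. P"] \<phi>_comp]]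
    show ?thesis by (simp add: comp_def)
  qed
  have sample: "integrable M (\<lambda>\<omega>. f (Z (a i) \<omega>)) \<and> (\<integral>\<omega>. f (Z (a i) \<omega>) \<partial>M) = (\<integral>z. f z \<partial>P)"
    if "i < n" "f \<in> borel_measurable P" "integrable P f"
    for i and f :: "'z \<Rightarrow> 'b::{banach,second_countable_topology}"
    using integrable_distr_eq[OF Z(1)[OF aI[OF that(1)]] that(2)]
      integral_distr[OF Z(1)[OF aI[OF that(1)]] that(2)] Z(2)[OF aI[OF that(1)]] that(3)
    by simp
  have "(\<lambda>z. (norm (\<phi> z))\<^sup>2) \<in> borel_measurable P" using \<phi>(1) by measurable
  note sample_norm_sq = sample[OF _ this \<phi>(3)]
  have "(\<integral>\<^sup>+\<omega>. ennreal (norm ((1 / real (card {..<n})) *\<^sub>R (\<Sum>i\<in>{..<n}. \<phi> (Z (a i) \<omega>)))) \<partial>M)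
        \<le> ennreal (sqrt (V / real (card {..<n})))"
    using indep_comp sample[OF _ \<phi>(1,2)] sample_norm_sq mean var \<open>0 < n\<close>
      measurable_compose[OF Z(1)[OF aI] \<phi>(1)]
    by (intro nn_integral_norm_mean_indep_le) (auto simp: comp_def)
  then show ?thesis by simp
qed

lemma integral_le_of_nn_integral_le:
  fixes f :: "'a \<Rightarrow> real"
  assumes "f \<in> borel_measurable M" "\<And>x. 0 \<le> f x" "(\<integral>\<^sup>+x. ennreal (f x) \<partial>M) \<le> ennreal c" "0 \<le> c"
  shows "integrable M f" "integral\<^sup>L M f \<le> c"
proof -
  show int: "integrable M f"
    using assms by (intro integrableI_nonneg) (auto simp: top_unique intro: le_less_trans)
  have "ennreal (integral\<^sup>L M f) \<le> ennreal c"
    using nn_integral_eq_integral[OF int] assms by simp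
  then show "integral\<^sup>L M f \<le> c" using \<open>0 \<le> c\<close> by simp
qed

section \<open>The subsampled Newton iteration\<close>

definition past_samples :: "(nat \<Rightarrow> nat) \<Rightarrow> (nat \<Rightarrow> nat) \<Rightarrow> nat \<Rightarrow> (bool \<times> nat \<times> nat) set" where
  "past_samples nX nS k = {j \<in> sample_index nX nS. fst (snd j) < k}"

lemma sn_iter_cong:
  assumes "\<And>j. j \<in> past_samples nX nS k \<Longrightarrow> Z1 j a = Z2 j b"
  shows "sn_iter w0 grad hess Z1 nX nS k a = sn_iter w0 grad hess Z2 nX nS k b"
  using assms
proof (induction k)
  case (Suc k)
  have "sn_iter w0 grad hess Z1 nX nS k a = sn_iter w0 grad hess Z2 nX nS k b"
    using Suc.prems by (intro Suc.IH) (auto simp: past_samples_def)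
  moreover have "(\<Sum>i<nS k. hess w (Z1 (True, k, i) a)) = (\<Sum>i<nS k. hess w (Z2 (True, k, i) b))" for w
    using Suc.prems by (intro sum.cong) (auto simp: past_samples_def sample_index_def)
  moreover have "(\<Sum>i<nX k. grad w (Z1 (False, k, i) a)) = (\<Sum>i<nX k. grad w (Z2 (False, k, i) b))" for w
    using Suc.prems by (intro sum.cong) (auto simp: past_samples_def sample_index_def)
  ultimately show ?case by (simp add: sample_hess_def sample_grad_def)
qed simp

lemma borel_measurable_compose_pair:
  fixes fn :: "'w::topological_space \<Rightarrow> 'z \<Rightarrow> 'c::topological_space"
  assumes "(\<lambda>(w, z). fn w z) \<in> borel_measurable (borel \<Otimes>\<^sub>M P)"
    and "G \<in> borel_measurable N" "Y \<in> measurable N P"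
  shows "(\<lambda>x. fn (G x) (Y x)) \<in> borel_measurable N"
  using measurable_compose[OF measurable_Pair[OF assms(2,3)] assms(1)] by simp

text \<open>A1 enters only through the lower bound on sampled Hessians; A3 and B1 are used only in
  \<open>expected_error_recursion\<close>.\<close>
locale subsampled_newton = P: prob_space P + Q: prob_space Q
  for P :: "'z measure" and Q :: "'a measure"
    and grad :: "real^'n \<Rightarrow> 'z \<Rightarrow> real^'n" and hess :: "real^'n \<Rightarrow> 'z \<Rightarrow> real^'n^'n"
    and gF :: "real^'n \<Rightarrow> real^'n" and HF :: "real^'n \<Rightarrow> real^'n^'n"
    and Z :: "bool \<times> nat \<times> nat \<Rightarrow> 'a \<Rightarrow> 'z" and nX nS :: "nat \<Rightarrow> nat"
    and w0 :: "real^'n" and \<mu>bar v \<sigma> :: real +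
  assumes grad_meas: "(\<lambda>(w, z). grad w z) \<in> borel_measurable (borel \<Otimes>\<^sub>M P)"
    and hess_meas: "(\<lambda>(w, z). hess w z) \<in> borel_measurable (borel \<Otimes>\<^sub>M P)"
    and gF_meas: "gF \<in> borel_measurable borel" and HF_meas: "HF \<in> borel_measurable borel"
    and grad_int: "\<And>w. integrable P (grad w)" and gF_unbiased: "\<And>w. gF w = (\<integral>z. grad w z \<partial>P)"
    and hess_int: "\<And>w. integrable P (hess w)" and HF_unbiased: "\<And>w. HF w = (\<integral>z. hess w z \<partial>P)"
    and hess_sym: "\<And>w z a b. z \<in> space P \<Longrightarrow> (hess w z *v a) \<bullet> b = (hess w z *v b) \<bullet> a"
    and HF_sym: "\<And>w a b. (HF w *v a) \<bullet> b = (HF w *v b) \<bullet> a"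
    and sample_hess_lower: "\<And>k w zs. (\<And>i. i < nS k \<Longrightarrow> zs i \<in> space P) \<Longrightarrow>
      loewner_le (mat \<mu>bar) ((1 / real (nS k)) *\<^sub>R (\<Sum>i<nS k. hess w (zs i)))"
    and grad_var: "0 \<le> v" "\<And>w. integrable P (\<lambda>z. (norm (grad w z - gF w))\<^sup>2)"
      "\<And>w. (\<integral>z. (norm (grad w z - gF w))\<^sup>2 \<partial>P) \<le> v\<^sup>2"
    and hess_var: "0 \<le> \<sigma>" "\<And>w. integrable P (\<lambda>z. (hess w z - HF w) ** (hess w z - HF w))"
      "\<And>w. onorm (\<lambda>x. (\<integral>z. (hess w z - HF w) ** (hess w z - HF w) \<partial>P) *v x) \<le> \<sigma>\<^sup>2"
    and \<mu>bar_pos: "0 < \<mu>bar" and nX_pos: "\<And>k. 0 < nX k" and nS_pos: "\<And>k. 0 < nS k"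
    and Z_meas: "\<And>j. j \<in> sample_index nX nS \<Longrightarrow> Z j \<in> measurable Q P"
    and Z_distr: "\<And>j. j \<in> sample_index nX nS \<Longrightarrow> distr Q P (Z j) = P"
    and Z_indep: "Q.indep_vars (\<lambda>_. P) Z (sample_index nX nS)"
begin

abbreviation iterate :: "nat \<Rightarrow> 'a \<Rightarrow> real^'n" where
  "iterate k \<equiv> sn_iter w0 grad hess Z nX nS k"

text \<open>The \<open>k\<close>-th iterate as a function of the past samples alone, read off as coordinates.\<close>
abbreviation iterate_of_samples :: "nat \<Rightarrow> (bool \<times> nat \<times> nat \<Rightarrow> 'z) \<Rightarrow> real^'n" where
  "iterate_of_samples k \<equiv> sn_iter w0 grad hess (\<lambda>j x. x j) nX nS k"

lemma iterate_eq_iterate_of_samples: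
  "iterate k \<omega> = iterate_of_samples k (restrict (\<lambda>j. Z j \<omega>) (past_samples nX nS k))"
  by (rule sn_iter_cong) simp

lemma iterate_of_samples_measurable:
  assumes "past_samples nX nS k \<subseteq> K"
  shows "iterate_of_samples k \<in> borel_measurable (PiM K (\<lambda>_. P))"
  using assms
proof (induction k)
  case (Suc k)
  let ?G = "iterate_of_samples k" and ?PK = "PiM K (\<lambda>_. P)"
  let ?H = "\<lambda>x. (1 / real (nS k)) *\<^sub>R (\<Sum>i<nS k. hess (?G x) (x (True, k, i)))"
  let ?g = "\<lambda>x. (1 / real (nX k)) *\<^sub>R (\<Sum>i<nX k. grad (?G x) (x (False, k, i)))"
  have G: "?G \<in> borel_measurable ?PK"
    using Suc by (intro Suc.IH) (auto simp: past_samples_def)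
  have in_K: "(True, k, i) \<in> K" if "i < nS k" for i
    using Suc.prems that by (auto simp: past_samples_def sample_index_def)
  have in_K': "(False, k, i) \<in> K" if "i < nX k" for i
    using Suc.prems that by (auto simp: past_samples_def sample_index_def)
  have H: "?H \<in> borel_measurable ?PK" and g: "?g \<in> borel_measurable ?PK"
    using in_K in_K' by (auto intro!: borel_measurable_scaleR borel_measurable_sum
        borel_measurable_compose_pair[OF hess_meas G] borel_measurable_compose_pair[OF grad_meas G]
        measurable_component_singleton)
  have "?G x - cramer_vec (?H x) (?g x) = iterate_of_samples (Suc k) x" if "x \<in> space ?PK" for x
  proof -
    have "invertible (?H x)"
      using in_K that by (intro loewner_le_mat_invertible[OF sample_hess_lower \<mu>bar_pos])
        (auto simp: space_PiM)
    then show ?thesis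
      by (simp add: sample_hess_def sample_grad_def matrix_inv_mult_eq_cramer_vec)
  qed
  moreover have "(\<lambda>x. ?G x - cramer_vec (?H x) (?g x)) \<in> borel_measurable ?PK"
    by (intro borel_measurable_diff G borel_measurable_cramer_vec H g)
  ultimately show ?case by (rule measurable_cong[THEN iffD1])
qed simp

lemma restrict_samples_measurable:
  assumes "B \<subseteq> sample_index nX nS"
  shows "(\<lambda>\<omega>. restrict (\<lambda>j. Z j \<omega>) B) \<in> measurable Q (PiM B (\<lambda>_. P))"
  using assms Z_meas by (intro measurable_restrict) auto

lemma iterate_measurable: "iterate k \<in> borel_measurable Q"
proof -
  have "(\<lambda>\<omega>. iterate_of_samples k (restrict (\<lambda>j. Z j \<omega>) (past_samples nX nS k))) \<in> borel_measurable Q"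
    using measurable_compose[OF restrict_samples_measurable iterate_of_samples_measurable[OF order_refl]]
    by (simp add: past_samples_def comp_def)
  then show ?thesis by (simp flip: iterate_eq_iterate_of_samples)
qed

lemma hess_deviation_second_moment:
  shows "integrable P (\<lambda>z. (norm ((hess w z - HF w) *v d))\<^sup>2)"
    and "(\<integral>z. (norm ((hess w z - HF w) *v d))\<^sup>2 \<partial>P) \<le> \<sigma>\<^sup>2 * (norm d)\<^sup>2"
proof -
  let ?B = "\<lambda>z. hess w z - HF w"
  \<comment> \<open>symmetry turns the squared norm into the quadratic form of the squared deviation\<close>
  have square: "(norm (?B z *v d))\<^sup>2 = ((?B z ** ?B z) *v d) \<bullet> d" if "z \<in> space P" for z
  proof -
    have "(norm (?B z *v d))\<^sup>2 = (?B z *v d) \<bullet> (?B z *v d)" by (simp add: power2_norm_eq_inner)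
    also have "\<dots> = (?B z *v (?B z *v d)) \<bullet> d"
      using hess_sym[OF that] HF_sym by (simp add: matrix_vector_mult_diff_rdistrib inner_diff_left)
    finally show ?thesis by (simp add: matrix_vector_mul_assoc)
  qed
  have int: "integrable P (\<lambda>z. ((?B z ** ?B z) *v d) \<bullet> d)"
    using integrable_bounded_linear[OF bounded_linear_quadratic_form hess_var(2)] by simp
  show "integrable P (\<lambda>z. (norm (?B z *v d))\<^sup>2)"
    by (rule Bochner_Integration.integrable_cong[THEN iffD2, OF refl _ int]) (simp add: square)
  have "(\<integral>z. (norm (?B z *v d))\<^sup>2 \<partial>P) = (\<integral>z. ((?B z ** ?B z) *v d) \<bullet> d \<partial>P)"
    by (rule Bochner_Integration.integral_cong) (simp_all add: square)
  also have "\<dots> = ((\<integral>z. ?B z ** ?B z \<partial>P) *v d) \<bullet> d"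
    by (rule integral_bounded_linear[OF bounded_linear_quadratic_form hess_var(2)])
  also have "\<dots> \<le> onorm (\<lambda>x. (\<integral>z. ?B z ** ?B z \<partial>P) *v x) * norm d * norm d"
    by (rule order_trans[OF norm_cauchy_schwarz mult_right_mono[OF norm_matrix_vector_le_onorm]]) simp
  also have "\<dots> \<le> \<sigma>\<^sup>2 * (norm d)\<^sup>2"
    using mult_right_mono[OF hess_var(3)[of w], of "norm d * norm d"]
    by (simp add: power2_eq_square mult.assoc)
  finally show "(\<integral>z. (norm (?B z *v d))\<^sup>2 \<partial>P) \<le> \<sigma>\<^sup>2 * (norm d)\<^sup>2" .
qed

lemma nn_integral_hess_sample_error_le:
  "(\<integral>\<^sup>+\<omega>. ennreal (norm ((1 / real (nS k)) *\<^sub>R (\<Sum>i<nS k. (hess w (Z (True, k, i) \<omega>) - HF w) *v d))) \<partial>Q)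
    \<le> ennreal (\<sigma> / sqrt (real (nS k)) * norm d)"
proof -
  let ?\<phi> = "\<lambda>z. (hess w z - HF w) *v d"
  have hess_w: "hess w \<in> borel_measurable P"
    using measurable_Pair2[OF hess_meas] by simp
  have int: "integrable P (\<lambda>z. hess w z *v d)"
    by (rule integrable_bounded_linear[OF bounded_linear_matrix_vector_mult_left hess_int])
  have "(\<integral>z. ?\<phi> z \<partial>P) = (\<integral>z. hess w z \<partial>P) *v d - HF w *v d"
    using int integral_bounded_linear[OF bounded_linear_matrix_vector_mult_left hess_int]
    by (simp add: matrix_vector_mult_diff_rdistrib P.prob_space)
  then have mean: "(\<integral>z. ?\<phi> z \<partial>P) = 0" by (simp add: HF_unbiased)
  have "(\<integral>\<^sup>+\<omega>. ennreal (norm ((1 / real (nS k)) *\<^sub>R (\<Sum>i<nS k. ?\<phi> (Z (True, k, i) \<omega>)))) \<partial>Q)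
      \<le> ennreal (sqrt (\<sigma>\<^sup>2 * (norm d)\<^sup>2 / real (nS k)))"
    using hess_w int hess_deviation_second_moment
    by (intro Q.nn_integral_norm_sample_mean_le[OF Z_indep Z_meas Z_distr _ _ nS_pos _ _ _ mean])
       (auto simp: inj_on_def sample_index_def matrix_vector_mult_diff_rdistrib
        intro!: borel_measurable_matrix_vector_mult)
  also have "sqrt (\<sigma>\<^sup>2 * (norm d)\<^sup>2 / real (nS k)) = \<sigma> / sqrt (real (nS k)) * norm d"
    using hess_var(1) by (simp add: real_sqrt_mult real_sqrt_divide)
  finally show ?thesis .
qed

lemma nn_integral_grad_sample_error_le:
  "(\<integral>\<^sup>+\<omega>. ennreal (norm ((1 / real (nX k)) *\<^sub>R (\<Sum>i<nX k. grad w (Z (False, k, i) \<omega>) - gF w))) \<partial>Q)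
    \<le> ennreal (v / sqrt (real (nX k)))"
proof -
  have grad_w: "grad w \<in> borel_measurable P"
    using measurable_Pair2[OF grad_meas] by simp
  have mean: "(\<integral>z. grad w z - gF w \<partial>P) = 0"
    using grad_int[of w] by (simp add: P.prob_space gF_unbiased)
  have "(\<integral>\<^sup>+\<omega>. ennreal (norm ((1 / real (nX k)) *\<^sub>R (\<Sum>i<nX k. grad w (Z (False, k, i) \<omega>) - gF w))) \<partial>Q)
      \<le> ennreal (sqrt (v\<^sup>2 / real (nX k)))"
    using grad_w grad_int grad_var
    by (intro Q.nn_integral_norm_sample_mean_le[OF Z_indep Z_meas Z_distr _ _ nX_pos _ _ _ mean])
       (auto simp: inj_on_def sample_index_def)
  also have "sqrt (v\<^sup>2 / real (nX k)) = v / sqrt (real (nX k))"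
    using grad_var(1) by (simp add: real_sqrt_divide)
  finally show ?thesis .
qed

lemma fresh_samples_at_iterate:
  fixes h :: "real^'n \<Rightarrow> (bool \<times> nat \<times> nat \<Rightarrow> 'z) \<Rightarrow> ennreal" and \<beta> :: "real^'n \<Rightarrow> ennreal"
  assumes B: "B \<subseteq> sample_index nX nS" "\<And>j. j \<in> B \<Longrightarrow> k \<le> fst (snd j)"
    and h: "(\<lambda>p. h (fst p) (snd p)) \<in> borel_measurable (borel \<Otimes>\<^sub>M PiM B (\<lambda>_. P))"
    and bound: "\<And>w. (\<integral>\<^sup>+\<omega>. h w (restrict (\<lambda>j. Z j \<omega>) B) \<partial>Q) \<le> \<beta> w"
    and \<beta>: "\<beta> \<in> borel_measurable borel"
  shows "(\<lambda>\<omega>. h (iterate k \<omega>) (restrict (\<lambda>j. Z j \<omega>) B)) \<in> borel_measurable Q"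
    and "(\<integral>\<^sup>+\<omega>. h (iterate k \<omega>) (restrict (\<lambda>j. Z j \<omega>) B) \<partial>Q) \<le> (\<integral>\<^sup>+\<omega>. \<beta> (iterate k \<omega>) \<partial>Q)"
proof -
  show "(\<lambda>\<omega>. h (iterate k \<omega>) (restrict (\<lambda>j. Z j \<omega>) B)) \<in> borel_measurable Q"
    using measurable_compose[OF measurable_Pair[OF iterate_measurable restrict_samples_measurable[OF B(1)]] h]
    by simp
  have "past_samples nX nS k \<subseteq> sample_index nX nS" "past_samples nX nS k \<inter> B = {}"
    using B(2) by (force simp: past_samples_def)+
  from Q.nn_integral_indep_substitute_le[OF Z_indep this(1) B(1) this(2)
      iterate_of_samples_measurable[OF order_refl] h bound \<beta>]
  show "(\<integral>\<^sup>+\<omega>. h (iterate k \<omega>) (restrict (\<lambda>j. Z j \<omega>) B) \<partial>Q) \<le> (\<integral>\<^sup>+\<omega>. \<beta> (iterate k \<omega>) \<partial>Q)"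
    by (simp only: iterate_eq_iterate_of_samples)
qed

definition hess_sample_error :: "real^'n \<Rightarrow> nat \<Rightarrow> 'a \<Rightarrow> real" where
  "hess_sample_error wstar k \<omega> = norm ((1 / real (nS k)) *\<^sub>R
     (\<Sum>i<nS k. (hess (iterate k \<omega>) (Z (True, k, i) \<omega>) - HF (iterate k \<omega>)) *v (iterate k \<omega> - wstar)))"

definition grad_sample_error :: "nat \<Rightarrow> 'a \<Rightarrow> real" where
  "grad_sample_error k \<omega> = norm ((1 / real (nX k)) *\<^sub>R
     (\<Sum>i<nX k. grad (iterate k \<omega>) (Z (False, k, i) \<omega>) - gF (iterate k \<omega>)))"

lemma hess_error_at_iterate:
  assumes "integrable Q (\<lambda>\<omega>. norm (iterate k \<omega> - wstar))"
  shows "integrable Q (hess_sample_error wstar k)"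
    and "(\<integral>\<omega>. hess_sample_error wstar k \<omega> \<partial>Q)
      \<le> \<sigma> / sqrt (real (nS k)) * (\<integral>\<omega>. norm (iterate k \<omega> - wstar) \<partial>Q)"
proof -
  let ?B = "(\<lambda>i. (True, k, i)) ` {..<nS k}"
  let ?h = "\<lambda>w x. ennreal (norm ((1 / real (nS k)) *\<^sub>R
      (\<Sum>i<nS k. (hess w (x (True, k, i)) - HF w) *v (w - wstar))))"
  have "(\<lambda>p. (1 / real (nS k)) *\<^sub>R (\<Sum>i<nS k. (hess (fst p) (snd p (True, k, i)) - HF (fst p)) *v (fst p - wstar)))
      \<in> borel_measurable (borel \<Otimes>\<^sub>M PiM ?B (\<lambda>_. P))"
    by (intro borel_measurable_scaleR borel_measurable_const borel_measurable_sum
        borel_measurable_matrix_vector_mult borel_measurable_diff measurable_const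
        borel_measurable_compose_pair[OF hess_meas measurable_fst]
        measurable_compose[OF measurable_snd measurable_component_singleton]
        measurable_compose[OF measurable_fst HF_meas] measurable_fst) auto
  from measurable_compose[OF measurable_compose[OF this borel_measurable_norm] measurable_ennreal]
  have meas: "(\<lambda>p. ?h (fst p) (snd p)) \<in> borel_measurable (borel \<Otimes>\<^sub>M PiM ?B (\<lambda>_. P))"
    by (simp add: comp_def)
  have bound: "(\<integral>\<^sup>+\<omega>. ?h w (restrict (\<lambda>j. Z j \<omega>) ?B) \<partial>Q)
      \<le> ennreal (\<sigma> / sqrt (real (nS k)) * norm (w - wstar))" for w
    using nn_integral_hess_sample_error_le[of k w] by simp
  have "?B \<subseteq> sample_index nX nS" "\<And>j. j \<in> ?B \<Longrightarrow> k \<le> fst (snd j)"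
    by (auto simp: sample_index_def)
  note fresh = fresh_samples_at_iterate[OF this meas bound]
  have meas_e: "hess_sample_error wstar k \<in> borel_measurable Q"
    using fresh(1) by (simp add: hess_sample_error_def[abs_def])
  have "(\<integral>\<^sup>+\<omega>. ennreal (hess_sample_error wstar k \<omega>) \<partial>Q)
      \<le> (\<integral>\<^sup>+\<omega>. ennreal (\<sigma> / sqrt (real (nS k)) * norm (iterate k \<omega> - wstar)) \<partial>Q)"
    using fresh(2) by (simp add: hess_sample_error_def)
  also have "\<dots> = ennreal (\<sigma> / sqrt (real (nS k)) * (\<integral>\<omega>. norm (iterate k \<omega> - wstar) \<partial>Q))"
    using assms hess_var(1) by (simp add: nn_integral_eq_integral)
  finally have "(\<integral>\<^sup>+\<omega>. ennreal (hess_sample_error wstar k \<omega>) \<partial>Q)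
      \<le> ennreal (\<sigma> / sqrt (real (nS k)) * (\<integral>\<omega>. norm (iterate k \<omega> - wstar) \<partial>Q))" .
  moreover have "0 \<le> \<sigma> / sqrt (real (nS k)) * (\<integral>\<omega>. norm (iterate k \<omega> - wstar) \<partial>Q)"
    using hess_var(1) by simp
  moreover have "0 \<le> hess_sample_error wstar k \<omega>" for \<omega> by (simp add: hess_sample_error_def)
  ultimately show "integrable Q (hess_sample_error wstar k)"
    "(\<integral>\<omega>. hess_sample_error wstar k \<omega> \<partial>Q) \<le> \<sigma> / sqrt (real (nS k)) * (\<integral>\<omega>. norm (iterate k \<omega> - wstar) \<partial>Q)"
    using integral_le_of_nn_integral_le[OF meas_e] by blast+
qed

lemma grad_error_at_iterate:
  shows "integrable Q (grad_sample_error k)"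
    and "(\<integral>\<omega>. grad_sample_error k \<omega> \<partial>Q) \<le> v / sqrt (real (nX k))"
proof -
  let ?B = "(\<lambda>i. (False, k, i)) ` {..<nX k}"
  let ?h = "\<lambda>w x. ennreal (norm ((1 / real (nX k)) *\<^sub>R (\<Sum>i<nX k. grad w (x (False, k, i)) - gF w)))"
  have "(\<lambda>p. (1 / real (nX k)) *\<^sub>R (\<Sum>i<nX k. grad (fst p) (snd p (False, k, i)) - gF (fst p)))
      \<in> borel_measurable (borel \<Otimes>\<^sub>M PiM ?B (\<lambda>_. P))"
    by (intro borel_measurable_scaleR borel_measurable_const borel_measurable_sum borel_measurable_diff
        borel_measurable_compose_pair[OF grad_meas measurable_fst]
        measurable_compose[OF measurable_snd measurable_component_singleton]
        measurable_compose[OF measurable_fst gF_meas]) auto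
  from measurable_compose[OF measurable_compose[OF this borel_measurable_norm] measurable_ennreal]
  have meas: "(\<lambda>p. ?h (fst p) (snd p)) \<in> borel_measurable (borel \<Otimes>\<^sub>M PiM ?B (\<lambda>_. P))"
    by (simp add: comp_def)
  have bound: "(\<integral>\<^sup>+\<omega>. ?h w (restrict (\<lambda>j. Z j \<omega>) ?B) \<partial>Q) \<le> ennreal (v / sqrt (real (nX k)))" for w
    using nn_integral_grad_sample_error_le[of k w] by simp
  have "?B \<subseteq> sample_index nX nS" "\<And>j. j \<in> ?B \<Longrightarrow> k \<le> fst (snd j)"
    by (auto simp: sample_index_def)
  note fresh = fresh_samples_at_iterate[OF this meas bound]
  have meas_e: "grad_sample_error k \<in> borel_measurable Q"
    using fresh(1) by (simp add: grad_sample_error_def[abs_def])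
  have "(\<integral>\<^sup>+\<omega>. ennreal (grad_sample_error k \<omega>) \<partial>Q) \<le> ennreal (v / sqrt (real (nX k)))"
    using fresh(2) by (simp add: grad_sample_error_def Q.emeasure_space_1)
  moreover have "0 \<le> v / sqrt (real (nX k))" using grad_var(1) by simp
  moreover have "0 \<le> grad_sample_error k \<omega>" for \<omega> by (simp add: grad_sample_error_def)
  ultimately show "integrable Q (grad_sample_error k)"
    "(\<integral>\<omega>. grad_sample_error k \<omega> \<partial>Q) \<le> v / sqrt (real (nX k))"
    using integral_le_of_nn_integral_le[OF meas_e] by blast+
qed

lemma iterate_error_le:
  assumes "\<omega> \<in> space Q"
  shows "norm (iterate (Suc k) \<omega> - wstar) \<le> (hess_sample_error wstar k \<omega>
    + norm (HF (iterate k \<omega>) *v (iterate k \<omega> - wstar) - gF (iterate k \<omega>)) + grad_sample_error k \<omega>) / \<mu>bar"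
proof -
  let ?w = "iterate k \<omega>"
  have "loewner_le (mat \<mu>bar) (sample_hess hess Z nS k ?w \<omega>)"
    unfolding sample_hess_def using measurable_space[OF Z_meas assms]
    by (intro sample_hess_lower) (simp add: sample_index_def)
  from newton_step_error_le[OF this \<mu>bar_pos, where w="?w" and g="sample_grad grad Z nX k ?w \<omega>"
      and ws=wstar and A="HF ?w" and b="gF ?w"]
  show ?thesis
    unfolding hess_sample_error_def grad_sample_error_def
      sample_mean_matrix_diff_mult[OF nS_pos, symmetric] sample_mean_diff[OF nX_pos, symmetric]
    by (simp add: sample_hess_def sample_grad_def)
qed

lemma expected_error_step:
  assumes taylor: "\<And>w. norm (HF w *v (w - wstar) - gF w) \<le> M / 2 * (norm (w - wstar))\<^sup>2"
    and sq_int: "integrable Q (\<lambda>\<omega>. (norm (iterate k \<omega> - wstar))\<^sup>2)"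
  shows "(\<integral>\<omega>. norm (iterate (Suc k) \<omega> - wstar) \<partial>Q)
    \<le> M / (2 * \<mu>bar) * (\<integral>\<omega>. (norm (iterate k \<omega> - wstar))\<^sup>2 \<partial>Q)
      + \<sigma> / (\<mu>bar * sqrt (real (nS k))) * (\<integral>\<omega>. norm (iterate k \<omega> - wstar) \<partial>Q)
      + v / (\<mu>bar * sqrt (real (nX k)))"
proof -
  let ?e = "\<lambda>k \<omega>. norm (iterate k \<omega> - wstar)"
  have "(\<lambda>\<omega>. ?e k \<omega>) \<in> borel_measurable Q" using iterate_measurable by measurable
  then have int: "integrable Q (?e k)" using sq_int by (rule Q.square_integrable_imp_integrable)
  note hess = hess_error_at_iterate[OF int] and grad = grad_error_at_iterate[of k]
  have "(\<integral>\<omega>. ?e (Suc k) \<omega> \<partial>Q)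
      \<le> (\<integral>\<omega>. (hess_sample_error wstar k \<omega> + M / 2 * (?e k \<omega>)\<^sup>2 + grad_sample_error k \<omega>) / \<mu>bar \<partial>Q)"
  proof (rule integral_mono')
    show "integrable Q (\<lambda>\<omega>. (hess_sample_error wstar k \<omega> + M / 2 * (?e k \<omega>)\<^sup>2 + grad_sample_error k \<omega>) / \<mu>bar)"
      using hess(1) grad(1) sq_int by auto
    show "?e (Suc k) \<omega> \<le> (hess_sample_error wstar k \<omega> + M / 2 * (?e k \<omega>)\<^sup>2 + grad_sample_error k \<omega>) / \<mu>bar"
      "0 \<le> (hess_sample_error wstar k \<omega> + M / 2 * (?e k \<omega>)\<^sup>2 + grad_sample_error k \<omega>) / \<mu>bar"
      if "\<omega> \<in> space Q" for \<omega>
      using iterate_error_le[OF that, of k] taylor[of "iterate k \<omega>"] \<mu>bar_pos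
        norm_ge_zero[of "iterate (Suc k) \<omega> - wstar"]
      by (smt (verit, ccfv_SIG) divide_right_mono)+
  qed
  also have "\<dots> = ((\<integral>\<omega>. hess_sample_error wstar k \<omega> \<partial>Q) + M / 2 * (\<integral>\<omega>. (?e k \<omega>)\<^sup>2 \<partial>Q)
      + (\<integral>\<omega>. grad_sample_error k \<omega> \<partial>Q)) / \<mu>bar"
    using hess(1) grad(1) sq_int by simp
  also have "\<dots> \<le> (\<sigma> / sqrt (real (nS k)) * (\<integral>\<omega>. ?e k \<omega> \<partial>Q) + M / 2 * (\<integral>\<omega>. (?e k \<omega>)\<^sup>2 \<partial>Q)
      + v / sqrt (real (nX k))) / \<mu>bar"
    using hess(2) grad(2) \<mu>bar_pos by (intro divide_right_mono add_mono) auto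
  finally show ?thesis using \<mu>bar_pos by (simp add: field_simps)
qed

lemma expected_error_recursion:
  assumes taylor: "\<And>w. norm (HF w *v (w - wstar) - gF w) \<le> M / 2 * (norm (w - wstar))\<^sup>2" and "0 \<le> M"
    and sq_int: "integrable Q (\<lambda>\<omega>. (norm (iterate k \<omega> - wstar))\<^sup>2)"
    and sq_le: "(\<integral>\<omega>. (norm (iterate k \<omega> - wstar))\<^sup>2 \<partial>Q) \<le> \<gamma> * (\<integral>\<omega>. norm (iterate k \<omega> - wstar) \<partial>Q)\<^sup>2"
  shows "(\<integral>\<omega>. norm (iterate (Suc k) \<omega> - wstar) \<partial>Q)
    \<le> M * \<gamma> / (2 * \<mu>bar) * (\<integral>\<omega>. norm (iterate k \<omega> - wstar) \<partial>Q)\<^sup>2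
      + \<sigma> / (\<mu>bar * sqrt (real (nS k))) * (\<integral>\<omega>. norm (iterate k \<omega> - wstar) \<partial>Q)
      + v / (\<mu>bar * sqrt (real (nX k)))"
proof -
  have "M / (2 * \<mu>bar) * (\<integral>\<omega>. (norm (iterate k \<omega> - wstar))\<^sup>2 \<partial>Q)
      \<le> M * \<gamma> / (2 * \<mu>bar) * (\<integral>\<omega>. norm (iterate k \<omega> - wstar) \<partial>Q)\<^sup>2"
    using mult_left_mono[OF sq_le, of "M / (2 * \<mu>bar)"] \<open>0 \<le> M\<close> \<mu>bar_pos by (simp add: mult_ac)
  then show ?thesis using expected_error_step[OF taylor sq_int] by linarith
qed

end

lemma mean_hessian_loewner_lower:
  fixes hess :: "real^'n \<Rightarrow> 'z \<Rightarrow> real^'n^'n"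
  assumes A1: "\<exists>\<mu>\<beta> L\<beta>. 0 < \<mu>\<beta> \<and> \<mu>\<beta> \<le> L\<beta> \<and> \<mu>bar \<le> \<mu>\<beta> \<and> L\<beta> \<le> Lbar \<and>
        (\<forall>w zs. length zs = n \<and> set zs \<subseteq> S \<longrightarrow>
           loewner_le (mat \<mu>\<beta>) ((1 / real n) *\<^sub>R (\<Sum>z\<leftarrow>zs. hess w z)) \<and>
           loewner_le ((1 / real n) *\<^sub>R (\<Sum>z\<leftarrow>zs. hess w z)) (mat L\<beta>))"
    and zs: "\<And>i. i < n \<Longrightarrow> zs i \<in> S"
  shows "loewner_le (mat \<mu>bar) ((1 / real n) *\<^sub>R (\<Sum>i<n. hess w (zs i)))"
proof -
  obtain \<mu>\<beta> where "\<mu>bar \<le> \<mu>\<beta>" and lower: "\<And>w zs. length zs = n \<Longrightarrow> set zs \<subseteq> S \<Longrightarrow>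
      loewner_le (mat \<mu>\<beta>) ((1 / real n) *\<^sub>R (\<Sum>z\<leftarrow>zs. hess w z))"
    using A1 by blast
  have "set (map zs [0..<n]) \<subseteq> S" using zs by auto
  from lower[OF _ this, of w]
  have "loewner_le (mat \<mu>\<beta>) ((1 / real n) *\<^sub>R (\<Sum>z\<leftarrow>map zs [0..<n]. hess w z))" by simp
  also have "(\<Sum>z\<leftarrow>map zs [0..<n]. hess w z) = (\<Sum>i<n. hess w (zs i))"
    by (simp add: interv_sum_list_conv_sum_set_nat atLeast0LessThan comp_def)
  finally have "loewner_le (mat \<mu>\<beta>) ((1 / real n) *\<^sub>R (\<Sum>i<n. hess w (zs i)))" .
  moreover have "x \<bullet> (mat \<mu>bar *v x) \<le> x \<bullet> (mat \<mu>\<beta> *v x)" for x :: "real^'n"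
    using \<open>\<mu>bar \<le> \<mu>\<beta>\<close> by (simp add: matrix_vector_mult_mat mult_right_mono)
  ultimately show ?thesis unfolding loewner_le_def by (meson order_trans)
qed

lemma inverse_sqrt_sample_size:
  fixes n :: "nat \<Rightarrow> nat"
  assumes "strict_mono n" "filterlim n at_top sequentially" "(4 * \<sigma> / \<mu>)\<^sup>2 \<le> real (n 0)"
    and "0 \<le> \<sigma>" "0 < \<mu>"
  shows "\<sigma> / (\<mu> * sqrt (real (n k))) \<le> 1/4"
    and "(\<lambda>k. \<sigma> / (\<mu> * sqrt (real (n k)))) \<longlonglongrightarrow> 0"
proof -
  show "\<sigma> / (\<mu> * sqrt (real (n k))) \<le> 1/4"
  proof (cases "\<sigma> = 0")
    case False
    then have "0 < \<sigma>" using assms(4) by simp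
    have "4 * \<sigma> / \<mu> \<le> sqrt (real (n 0))"
      using real_sqrt_le_mono[OF assms(3)] \<open>0 < \<sigma>\<close> assms(5) by simp
    also have "\<dots> \<le> sqrt (real (n k))" using assms(1) by (simp add: strict_mono_less_eq)
    finally have "4 * \<sigma> \<le> \<mu> * sqrt (real (n k))" using assms(5) by (simp add: field_simps)
    then show ?thesis using \<open>0 < \<sigma>\<close> assms(5) by (simp add: field_simps)
  qed simp
  have "filterlim (\<lambda>k. sqrt (real (n k))) at_top sequentially"
    using filterlim_compose[OF sqrt_at_top filterlim_compose[OF filterlim_real_sequentially assms(2)]]
    by (simp add: o_def)
  from tendsto_divide_0[OF tendsto_const filterlim_at_top_imp_at_infinity[OF this], of "\<sigma> / \<mu>"]
  show "(\<lambda>k. \<sigma> / (\<mu> * sqrt (real (n k)))) \<longlonglongrightarrow> 0" by simp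
qed

text \<open>Condition (i) makes the gradient-sampling error decay like \<open>1 / \<eta>\<^sub>k\<^sup>k\<^sup>/\<^sup>2\<close>, whose
  consecutive ratios are at most \<open>1 / \<eta>\<^sub>k\<^sub>+\<^sub>1\<^sup>1\<^sup>/\<^sup>2 \<longrightarrow> 0\<close>.\<close>
lemma inverse_sqrt_power_schedule:
  fixes \<eta> :: "nat \<Rightarrow> real"
  assumes \<eta>: "strict_mono \<eta>" "filterlim \<eta> at_top sequentially" "1 < \<eta> 1" and "0 \<le> K"
  shows "1 \<le> \<eta> k ^ k" and "0 \<le> K / sqrt (\<eta> k ^ k)" and "K / sqrt (\<eta> k ^ k) \<le> K"
    and "0 \<le> 1 / sqrt (\<eta> (Suc k))"
    and "K / sqrt (\<eta> (Suc k) ^ Suc k) \<le> 1 / sqrt (\<eta> (Suc k)) * (K / sqrt (\<eta> k ^ k))"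
    and "(\<lambda>k. 1 / sqrt (\<eta> (Suc k))) \<longlonglongrightarrow> 0"
proof -
  have \<eta>_gt_1: "1 < \<eta> k" if "1 \<le> k" for k
    using \<eta>(1,3) that by (metis order_less_le_trans strict_mono_less_eq)
  show pow: "1 \<le> \<eta> k ^ k" for k
    using \<eta>_gt_1[of k] by (cases "k = 0") (simp_all add: one_le_power)
  show "0 \<le> K / sqrt (\<eta> k ^ k)" using \<open>0 \<le> K\<close> pow[of k] by (intro divide_nonneg_nonneg) auto
  show "K / sqrt (\<eta> k ^ k) \<le> K"
    using \<open>0 \<le> K\<close> pow[of k] by (simp add: divide_le_eq mult_le_cancel_left1)
  show "0 \<le> 1 / sqrt (\<eta> (Suc k))" using \<eta>_gt_1[of "Suc k"] by simp
  have "\<eta> k ^ k \<le> \<eta> (Suc k) ^ k"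
    using \<eta>(1) \<eta>_gt_1[of k] by (cases "k = 0") (simp_all add: power_mono strict_mono_less_eq)
  then have "sqrt (\<eta> k ^ k) \<le> sqrt (\<eta> (Suc k) ^ k)" by simp
  moreover have "0 < sqrt (\<eta> k ^ k)" using pow[of k] by simp
  moreover have "sqrt (\<eta> (Suc k) ^ Suc k) = sqrt (\<eta> (Suc k)) * sqrt (\<eta> (Suc k) ^ k)"
    by (simp add: real_sqrt_mult)
  ultimately show "K / sqrt (\<eta> (Suc k) ^ Suc k) \<le> 1 / sqrt (\<eta> (Suc k)) * (K / sqrt (\<eta> k ^ k))"
    using \<open>0 \<le> K\<close> \<eta>_gt_1[of "Suc k"]
    by (simp add: divide_left_mono mult_mono frac_le)
  have "filterlim (\<lambda>k. sqrt (\<eta> (Suc k))) at_top sequentially"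
    using filterlim_compose[OF sqrt_at_top filterlim_compose[OF \<eta>(2) filterlim_Suc]] by (simp add: o_def)
  from tendsto_divide_0[OF tendsto_const filterlim_at_top_imp_at_infinity[OF this], of 1]
  show "(\<lambda>k. 1 / sqrt (\<eta> (Suc k))) \<longlonglongrightarrow> 0" .
qed

lemma inverse_sqrt_geometric_sample_size:
  assumes "real n0 * q \<le> real n" "1 \<le> q" "0 < n0" "0 \<le> v" "0 < \<mu>"
  shows "v / (\<mu> * sqrt (real n)) \<le> v / (\<mu> * sqrt (real n0)) / sqrt q"
proof -
  have "sqrt (real n0) * sqrt q \<le> sqrt (real n)"
    using assms(1) by (simp add: real_sqrt_mult[symmetric])
  then have "\<mu> * (sqrt (real n0) * sqrt q) \<le> \<mu> * sqrt (real n)"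
    using assms(5) by simp
  moreover have "0 < \<mu> * (sqrt (real n0) * sqrt q)" using assms(2,3,5) by simp
  ultimately have "v / (\<mu> * sqrt (real n)) \<le> v / (\<mu> * (sqrt (real n0) * sqrt q))"
    using assms(4) by (intro divide_left_mono) simp_all
  then show ?thesis by (simp add: mult.assoc)
qed

lemma initial_sample_size_bound:
  assumes "(6 * v * \<gamma> * M / \<mu>\<^sup>2)\<^sup>2 \<le> real n0" "0 < n0" "0 \<le> v" "0 < \<gamma>" "0 < M" "0 < \<mu>"
  shows "v / (\<mu> * sqrt (real n0)) \<le> \<mu> / (3 * \<gamma> * M) / 2"
proof -
  have "6 * v * \<gamma> * M / \<mu>\<^sup>2 \<le> sqrt (real n0)"
    using real_sqrt_le_mono[OF assms(1)] assms(3-6) by simp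
  then have "6 * v * \<gamma> * M \<le> \<mu>\<^sup>2 * sqrt (real n0)" using assms(6) by (simp add: field_simps)
  then show ?thesis
    using assms(2-6) by (simp add: field_simps power2_eq_square)
qed

theorem theorem2p4:
  fixes P :: "'z measure" and Q :: "'a measure"
    and f :: "real^'n \<Rightarrow> 'z \<Rightarrow> real"
    and grad :: "real^'n \<Rightarrow> 'z \<Rightarrow> real^'n"
    and hess :: "real^'n \<Rightarrow> 'z \<Rightarrow> real^'n^'n"
    and F :: "real^'n \<Rightarrow> real" and gF :: "real^'n \<Rightarrow> real^'n" and HF :: "real^'n \<Rightarrow> real^'n^'n"
    and wstar w0 :: "real^'n"
    and Z :: "bool \<times> nat \<times> nat \<Rightarrow> 'a \<Rightarrow> 'z"
    and nX nS :: "nat \<Rightarrow> nat" and \<eta> :: "nat \<Rightarrow> real"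
    and \<mu>bar Lbar \<mu> L v M \<sigma> \<gamma> :: real
  assumes probP: "prob_space P" and probQ: "prob_space Q"
    \<comment> \<open>the loss, its per-sample gradient and Hessian\<close>
    and f_int: "\<And>w. integrable P (f w)"
    and F_def: "\<And>w. F w = (\<integral>z. f w z \<partial>P)"
    and f_deriv: "\<And>w z. z \<in> space P \<Longrightarrow> ((\<lambda>u. f u z) has_derivative (\<lambda>h. grad w z \<bullet> h)) (at w)"
    and grad_deriv: "\<And>w z. z \<in> space P \<Longrightarrow> ((\<lambda>u. grad u z) has_derivative (\<lambda>h. hess w z *v h)) (at w)"
    and grad_meas: "(\<lambda>(w, z). grad w z) \<in> borel_measurable (borel \<Otimes>\<^sub>M P)"
    and hess_meas: "(\<lambda>(w, z). hess w z) \<in> borel_measurable (borel \<Otimes>\<^sub>M P)"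
    \<comment> \<open>F twice continuously differentiable; sample gradients/Hessians unbiased\<close>
    and F_deriv: "\<And>w. (F has_derivative (\<lambda>h. gF w \<bullet> h)) (at w)"
    and gF_deriv: "\<And>w. (gF has_derivative (\<lambda>h. HF w *v h)) (at w)"
    and HF_cont: "continuous_on UNIV HF"
    and grad_int: "\<And>w. integrable P (grad w)"
    and gF_unbiased: "\<And>w. gF w = (\<integral>z. grad w z \<partial>P)"
    and hess_int: "\<And>w. integrable P (hess w)"
    and HF_unbiased: "\<And>w. HF w = (\<integral>z. hess w z \<partial>P)"
    \<comment> \<open>w* is the unique minimizer of F\<close>
    and wstar_min: "\<And>w. F wstar \<le> F w"
    and wstar_unique: "\<And>w. (\<forall>u. F w \<le> F u) \<Longrightarrow> w = wstar"
    \<comment> \<open>Assumption A1\<close>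
    and A1_bar: "0 < \<mu>bar"
    and A1_sub: "\<And>\<beta>. 0 < \<beta> \<Longrightarrow> \<exists>\<mu>\<beta> L\<beta>. 0 < \<mu>\<beta> \<and> \<mu>\<beta> \<le> L\<beta> \<and> \<mu>bar \<le> \<mu>\<beta> \<and> L\<beta> \<le> Lbar \<and>
        (\<forall>w zs. length zs = \<beta> \<and> set zs \<subseteq> space P \<longrightarrow>
           loewner_le (mat \<mu>\<beta>) ((1 / real \<beta>) *\<^sub>R (\<Sum>z\<leftarrow>zs. hess w z)) \<and>
           loewner_le ((1 / real \<beta>) *\<^sub>R (\<Sum>z\<leftarrow>zs. hess w z)) (mat L\<beta>))"
    and A1_F: "0 < \<mu>" "\<mu> \<le> L" "\<And>w. loewner_le (mat \<mu>) (HF w) \<and> loewner_le (HF w) (mat L)"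
    \<comment> \<open>Assumption A2: tr Cov(grad F_i(w)) = E ||grad F_i(w) - grad F(w)||^2 \<le> v^2\<close>
    and A2: "0 \<le> v" "\<And>w. integrable P (\<lambda>z. (norm (grad w z - gF w))\<^sup>2)"
      "\<And>w. (\<integral>z. (norm (grad w z - gF w))\<^sup>2 \<partial>P) \<le> v\<^sup>2"
    \<comment> \<open>Assumption A3 (operator norm)\<close>
    and A3: "0 < M" "\<And>w u. onorm (\<lambda>x. (HF w - HF u) *v x) \<le> M * norm (w - u)"
    \<comment> \<open>Assumption A4\<close>
    and A4: "0 \<le> \<sigma>" "\<And>w. integrable P (\<lambda>z. (hess w z - HF w) ** (hess w z - HF w))"
      "\<And>w. onorm (\<lambda>x. (\<integral>z. (hess w z - HF w) ** (hess w z - HF w) \<partial>P) *v x) \<le> \<sigma>\<^sup>2"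
    \<comment> \<open>samples: independent points drawn from P\<close>
    and Z_meas: "\<And>j. j \<in> sample_index nX nS \<Longrightarrow> Z j \<in> measurable Q P"
    and Z_distr: "\<And>j. j \<in> sample_index nX nS \<Longrightarrow> distr Q P (Z j) = P"
    and Z_indep: "prob_space.indep_vars Q (\<lambda>_. P) Z (sample_index nX nS)"
    \<comment> \<open>Assumption B1 on the iterates\<close>
    and B1: "0 < \<gamma>"
      "\<And>k. integrable Q (\<lambda>\<omega>. (norm (sn_iter w0 grad hess Z nX nS k \<omega> - wstar))\<^sup>2)"
      "\<And>k. (\<integral>\<omega>. (norm (sn_iter w0 grad hess Z nX nS k \<omega> - wstar))\<^sup>2 \<partial>Q)
             \<le> \<gamma> * (\<integral>\<omega>. norm (sn_iter w0 grad hess Z nX nS k \<omega> - wstar) \<partial>Q)\<^sup>2"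
    \<comment> \<open>sample size conditions (i) and (ii)\<close>
    and nX_pos: "\<And>k. 0 < nX k" and nS0_pos: "0 < nS 0"
    and cond_i: "\<And>k. real (nX k) \<ge> real (nX 0) * \<eta> k ^ k"
      "real (nX 0) \<ge> (6 * v * \<gamma> * M / \<mu>bar\<^sup>2)\<^sup>2"
      "strict_mono \<eta>" "filterlim \<eta> at_top sequentially" "\<eta> 1 > 1"
    and cond_ii: "strict_mono nS" "filterlim nS at_top sequentially"
      "real (nS 0) \<ge> (4 * \<sigma> / \<mu>bar)\<^sup>2"
    and init: "norm (w0 - wstar) \<le> \<mu>bar / (3 * \<gamma> * M)"
  shows "\<exists>\<tau> :: nat \<Rightarrow> real. (\<forall>k. 0 < \<tau> k) \<and>
           (\<forall>k. (\<integral>\<omega>. norm (sn_iter w0 grad hess Z nX nS k \<omega> - wstar) \<partial>Q) \<le> \<tau> k) \<and>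
           (\<lambda>k. \<tau> (Suc k) / \<tau> k) \<longlonglongrightarrow> 0"
proof -
  interpret P: prob_space P by (rule probP)
  interpret Q: prob_space Q by (rule probQ)
  have nS_pos: "0 < nS k" for k
    using cond_ii(1) nS0_pos by (metis gr0I le_zero_eq strict_mono_less_eq zero_le)
  interpret subsampled_newton P Q grad hess gF HF Z nX nS w0 \<mu>bar v \<sigma>
  proof
    show "gF \<in> borel_measurable borel" using gF_deriv
      by (intro borel_measurable_continuous_onI continuous_at_imp_continuous_on ballI
          has_derivative_continuous)
    show "(hess w z *v a) \<bullet> b = (hess w z *v b) \<bullet> a" if "z \<in> space P" for w z a b
      using f_deriv[OF that] grad_deriv[OF that] by (rule hessian_symmetric)
    show "loewner_le (mat \<mu>bar) ((1 / real (nS k)) *\<^sub>R (\<Sum>i<nS k. hess w (zs i)))"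
      if "\<And>i. i < nS k \<Longrightarrow> zs i \<in> space P" for k w zs
      using A1_sub[OF nS_pos] that by (rule mean_hessian_loewner_lower)
  qed (use assms nS_pos hessian_symmetric[OF F_deriv gF_deriv] borel_measurable_continuous_onI[OF HF_cont]
      in auto)
  define E where "E k = (\<integral>\<omega>. norm (iterate k \<omega> - wstar) \<partial>Q)" for k
  define A where "A = M * \<gamma> / (2 * \<mu>bar)"
  define t0 where "t0 = \<mu>bar / (3 * \<gamma> * M)"
  define b where "b k = \<sigma> / (\<mu>bar * sqrt (real (nS k)))" for k
  define K where "K = v / (\<mu>bar * sqrt (real (nX 0)))"
  define c where "c k = K / sqrt (\<eta> k ^ k)" for k
  have "0 \<le> K" "K \<le> t0 / 2"
    using A2(1) A1_bar initial_sample_size_bound[OF cond_i(2) nX_pos A2(1) B1(1) A3(1) A1_bar]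
    by (simp_all add: K_def t0_def)
  note schedule = inverse_sqrt_power_schedule[OF cond_i(3-5) \<open>0 \<le> K\<close>]
  interpret quadratic_recursion A t0 b c
    using A1_bar A3(1) B1(1) A4(1) inverse_sqrt_sample_size(1)[OF cond_ii A4(1) A1_bar] schedule(2,3)
      \<open>K \<le> t0 / 2\<close>
    by unfold_locales (auto simp: A_def t0_def b_def c_def intro: order_trans)
  have taylor: "norm (HF w *v (w - wstar) - gF w) \<le> M / 2 * (norm (w - wstar))\<^sup>2" for w
    using gradient_taylor_remainder_le[OF gF_deriv A3(2) gradient_zero_at_minimum[OF F_deriv wstar_min]]
      A3(1) by simp
  have c_bound: "v / (\<mu>bar * sqrt (real (nX k))) \<le> c k" for k
    using inverse_sqrt_geometric_sample_size[OF cond_i(1) schedule(1) nX_pos A2(1) A1_bar]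
    by (simp add: c_def K_def)
  have "E (Suc k) \<le> A * (E k)\<^sup>2 + b k * E k + c k" for k
    using c_bound[of k] expected_error_recursion[OF taylor less_imp_le[OF A3(1)] B1(2,3), where k=k]
    unfolding E_def A_def b_def by linarith
  then have "E k \<le> quadratic_majorant A t0 b c k" for k
    using init by (intro majorant_dominates) (simp_all add: E_def t0_def Q.prob_space)
  moreover have "b \<longlonglongrightarrow> 0"
    unfolding b_def by (rule inverse_sqrt_sample_size(2)[OF cond_ii A4(1) A1_bar])
  then have "(\<lambda>k. quadratic_majorant A t0 b c (Suc k) / quadratic_majorant A t0 b c k) \<longlonglongrightarrow> 0"
    by (rule majorant_ratio_tendsto_zero[OF _ schedule(4) _ schedule(6)]) (use schedule(5) in \<open>simp add: c_def\<close>)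
  ultimately show ?thesis
    using majorant_pos_le unfolding E_def by blast
qed

end
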